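(* Let $f\in\mathbb{R}\{x_1,\dots,x_n\}$ be a convergent power series defining a real analytic function on a sufficiently small open neighborhood $X_{\mathbb{R}}$ of $0\in\mathbb{R}^n$, and write $f=\sum_{k\ge d}f_k$ with $f_k$ homogeneous of degree $k$ and $f_d\neq0$. Assume $f$ has an isolated zero of simple type at $0$, i.e. the equation $f_d=0$ has no solution in $\mathbb{R}^n\setminus\{0\}$ (and $f(0)=0$). Then for every $\alpha\in\mathbb{Q}_{>0}$, $$\mathcal{J}(X_{\mathbb{R}},f^{\alpha})_0=\mathfrak{m}_0^{[\alpha d]-n+1},$$ the set of real jumping numbers of $f$ is $\{k/d: k\in\mathbb{Z},\ k\ge n\}$, and $\mathrm{rlct}(f)=n/d$.
   Context: $\mathfrak{m}_0$ is the maximal ideal of the ring $\mathcal{O}_{X_{\mathbb{R}},0}$ of germs of real analytic functions at $0$, with the convention $\mathfrak{m}_0^k=\mathcal{O}_{X_{\mathbb{R}},0}$ for $k\le0$; $[\cdot]$ is the integer part. For $\alpha\in\mathbb{Q}_{>0}$ the real multiplier ideal $\mathcal{J}(X_{\mathbb{R}},f^{\alpha})$ has stalk at $x$ consisting of real analytic germs $g$ such that $|g|/|f|^{\alpha}$ is locally integrable near $x$. Real jumping numbers are the $\alpha>0$ with $\mathcal{J}(X_{\mathbb{R}},f^{\alpha-\varepsilon})\ne\mathcal{J}(X_{\mathbb{R}},f^{\alpha})$ for all $0<\varepsilon\ll1$, and $\mathrm{rlct}(f)$ is the smallest of them (the smallest $\alpha$ with $|f|^{-\alpha}$ not locally integrable).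 *)

theory Defs
  imports "HOL-Analysis.Analysis"
begin

definition mono :: "real^'n \<Rightarrow> ('n \<Rightarrow> nat) \<Rightarrow> real" where
  "mono x \<beta> = (\<Prod>i\<in>UNIV. (x $ i) ^ (\<beta> i))"

definition mdeg :: "('n::finite \<Rightarrow> nat) \<Rightarrow> nat" where
  "mdeg \<beta> = (\<Sum>i\<in>UNIV. \<beta> i)"

definition pseries_rep :: "(('n::finite \<Rightarrow> nat) \<Rightarrow> real) \<Rightarrow> (real^'n \<Rightarrow> real) \<Rightarrow> bool" where
  "pseries_rep c g \<longleftrightarrow> (\<exists>r>0. \<forall>x\<in>ball 0 r. ((\<lambda>\<beta>. c \<beta> * mono x \<beta>) has_sum g x) UNIV)"

definition analytic_germ0 :: "(real^'n::finite \<Rightarrow> real) \<Rightarrow> bool" where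
  "analytic_germ0 g \<longleftrightarrow> (\<exists>c. pseries_rep c g)"

definition hom_part :: "(('n::finite \<Rightarrow> nat) \<Rightarrow> real) \<Rightarrow> nat \<Rightarrow> real^'n \<Rightarrow> real" where
  "hom_part c k x = (\<Sum>\<beta>\<in>{\<beta>. mdeg \<beta> = k}. c \<beta> * mono x \<beta>)"

text \<open>m_0^k: germs whose power series has no terms of degree < k
  (for k <= 0 this is all of O_{X_R,0}).\<close>
definition maxideal_pow :: "int \<Rightarrow> (real^'n::finite \<Rightarrow> real) set" where
  "maxideal_pow k = {g. \<exists>c. pseries_rep c g \<and> (\<forall>\<beta>. int (mdeg \<beta>) < k \<longrightarrow> c \<beta> = 0)}"

definition loc_integrable0 :: "(real^'n::finite \<Rightarrow> real) \<Rightarrow> bool" where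
  "loc_integrable0 h \<longleftrightarrow> (\<exists>U. open U \<and> 0 \<in> U \<and> h absolutely_integrable_on U)"

definition mult_ideal0 :: "(real^'n::finite \<Rightarrow> real) \<Rightarrow> real \<Rightarrow> (real^'n \<Rightarrow> real) set" where
  "mult_ideal0 f \<alpha> = {g. analytic_germ0 g \<and> loc_integrable0 (\<lambda>x. \<bar>g x\<bar> / \<bar>f x\<bar> powr \<alpha>)}"

definition jumping_numbers0 :: "(real^'n::finite \<Rightarrow> real) \<Rightarrow> real set" where
  "jumping_numbers0 f = {\<alpha>. \<alpha> > 0 \<and>
     (\<exists>e0>0. \<forall>e. 0 < e \<and> e < e0 \<longrightarrow> mult_ideal0 f (\<alpha> - e) \<noteq> mult_ideal0 f \<alpha>)}"

definition rlct :: "(real^'n::finite \<Rightarrow> real) \<Rightarrow> real" where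
  "rlct f = Inf {\<alpha>. \<alpha> > 0 \<and> \<not> loc_integrable0 (\<lambda>x. 1 / \<bar>f x\<bar> powr \<alpha>)}"

end

theory Submission
  imports Defs
begin

text \<open>Near \<open>0\<close> a simple zero of order \<open>d\<close> satisfies \<open>m * norm x ^ d \<le> \<bar>f x\<bar> \<le> M * norm x ^ d\<close>,
  so \<open>\<bar>g\<bar> / \<bar>f\<bar> powr \<alpha>\<close> behaves like \<open>\<bar>g x\<bar> * norm x powr (- \<alpha> * d)\<close>. If \<open>g\<close> has no terms of
  degree \<open>\<le> \<alpha> d - n\<close>, then \<open>g = O(norm x ^ K)\<close> with \<open>K > \<alpha> d - n\<close> and the quotient is dominated
  by \<open>norm x powr (K - \<alpha> d)\<close>, which is integrable near \<open>0\<close> in \<open>\<real>\<^sup>n\<close> (sum over dyadic shells).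
  Otherwise the lowest form \<open>g\<^sub>k\<close> of \<open>g\<close> has \<open>k \<le> \<alpha> d - n\<close> and is nonzero at some \<open>u\<close>; on the
  disjoint balls of radius \<open>\<sim> 4 ^ -j\<close> around \<open>4 ^ -j * u\<close> the quotient is \<open>\<ge> const * 4 ^ (j (\<alpha> d - k))\<close>,
  so each ball contributes a fixed positive amount to the integral. Hence the multiplier ideal is
  \<open>maxideal_pow (\<lfloor>\<alpha> d\<rfloor> - n + 1)\<close>; as these powers are pairwise distinct in positive degree and
  all equal to the whole ring in degree \<open>\<le> 0\<close>, the jumping numbers and the threshold follow.\<close>

section \<open>Monomials and homogeneous parts\<close>

lemma finite_mdeg_le: "finite {\<beta>::'n::finite \<Rightarrow> nat. mdeg \<beta> \<le> K}"
proof (rule finite_subset)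
  show "{\<beta>::'n \<Rightarrow> nat. mdeg \<beta> \<le> K} \<subseteq> PiE UNIV (\<lambda>_. {..K})"
  proof
    fix \<beta> :: "'n \<Rightarrow> nat"
    assume "\<beta> \<in> {\<beta>. mdeg \<beta> \<le> K}"
    then have "\<beta> i \<le> K" for i
      unfolding mdeg_def using member_le_sum[of i UNIV \<beta>] by auto
    then show "\<beta> \<in> PiE UNIV (\<lambda>_. {..K})"
      by (auto simp: PiE_def extensional_def)
  qed
qed (simp add: finite_PiE)

lemma finite_mdeg_less: "finite {\<beta>::'n::finite \<Rightarrow> nat. mdeg \<beta> < K}"
  by (rule finite_subset[OF _ finite_mdeg_le[of K]]) auto

lemma finite_mdeg_eq: "finite {\<beta>::'n::finite \<Rightarrow> nat. mdeg \<beta> = K}"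
  by (rule finite_subset[OF _ finite_mdeg_le[of K]]) auto

lemma mdeg_eq_0_iff: "mdeg \<beta> = 0 \<longleftrightarrow> \<beta> = (\<lambda>_. 0)"
  by (auto simp: mdeg_def fun_eq_iff)

lemma abs_mono_le: "\<bar>mono (x::real^'n::finite) \<beta>\<bar> \<le> norm x ^ mdeg \<beta>"
proof -
  have "\<bar>mono x \<beta>\<bar> = (\<Prod>i\<in>UNIV. \<bar>x $ i\<bar> ^ \<beta> i)"
    unfolding mono_def by (simp add: abs_prod power_abs)
  also have "\<dots> \<le> (\<Prod>i\<in>UNIV. norm x ^ \<beta> i)"
    by (intro prod_mono conjI power_mono) (auto simp: component_le_norm_cart)
  also have "\<dots> = norm x ^ mdeg \<beta>"
    unfolding mdeg_def by (simp add: power_sum)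
  finally show ?thesis .
qed

lemma mono_scaleR: "mono (t *\<^sub>R (x::real^'n::finite)) \<beta> = t ^ mdeg \<beta> * mono x \<beta>"
  unfolding mono_def mdeg_def by (simp add: power_mult_distrib prod.distrib power_sum)

lemma mono_const: "mono ((\<chi> i. a)::real^'n::finite) \<beta> = a ^ mdeg \<beta>"
  unfolding mono_def mdeg_def by (simp add: power_sum)

lemma mono_0: "mono (0::real^'n::finite) \<beta> = (if \<beta> = (\<lambda>_. 0) then 1 else 0)"
proof (cases "\<beta> = (\<lambda>_. 0)")
  case False
  then obtain i where "\<beta> i \<noteq> 0" by auto
  then show ?thesis
    using False by (auto simp: mono_def intro!: prod_zero bexI[of _ i])
qed (simp add: mono_def)

lemma hom_part_scaleR: "hom_part c k (t *\<^sub>R x) = t ^ k * hom_part c k x"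
  unfolding hom_part_def by (simp add: mono_scaleR sum_distrib_left algebra_simps)

lemma hom_part_0: "hom_part c 0 x = c (\<lambda>_. 0)"
  unfolding hom_part_def mdeg_eq_0_iff by (simp add: mono_def)

lemma continuous_on_mono: "continuous_on S (\<lambda>x::real^'n::finite. mono x \<beta>)"
  unfolding mono_def by (intro continuous_intros)

lemma continuous_on_hom_part: "continuous_on S (hom_part c k)"
  unfolding hom_part_def by (intro continuous_intros continuous_on_mono)

lemma sum_mdeg_less_Suc_eq_hom_part:
  assumes "\<forall>\<beta>. mdeg \<beta> < k \<longrightarrow> c \<beta> = 0"
  shows "(\<Sum>\<beta>\<in>{\<beta>::'n::finite\<Rightarrow>nat. mdeg \<beta> < Suc k}. c \<beta> * mono x \<beta>) = hom_part c k x"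
  unfolding hom_part_def
  by (rule sum.mono_neutral_right[OF finite_mdeg_less]) (use assms in auto)

lemma pseries_rep_at_0:
  assumes "pseries_rep c g"
  shows "g (0::real^'n::finite) = c (\<lambda>_. 0)"
proof -
  have "((\<lambda>\<beta>. c \<beta> * mono 0 \<beta>) has_sum g (0::real^'n)) UNIV"
    using assms unfolding pseries_rep_def by (metis centre_in_ball)
  moreover have "((\<lambda>\<beta>. c \<beta> * mono (0::real^'n) \<beta>) has_sum c (\<lambda>_. 0)) UNIV"
    by (rule has_sum_finite_neutralI[of "{\<lambda>_. 0}"]) (auto simp: mono_0)
  ultimately show ?thesis by (rule has_sum_unique)
qed

section \<open>Estimates for convergent power series\<close>

text \<open>Unconditional convergence of a real series is absolute, so convergence at the diagonal point
  \<open>(\<rho>, ..., \<rho>)\<close> yields the majorant \<open>\<Sum>\<beta>. \<bar>c \<beta>\<bar> * \<rho> ^ mdeg \<beta>\<close>.\<close>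
lemma pseries_rep_abs_summable:
  fixes g :: "real^'n::finite \<Rightarrow> real"
  assumes "pseries_rep c g"
  obtains \<rho> where "\<rho> > 0" "(\<lambda>\<beta>. \<bar>c \<beta>\<bar> * \<rho> ^ mdeg \<beta>) summable_on UNIV"
    "\<And>x. norm x \<le> \<rho> \<Longrightarrow> ((\<lambda>\<beta>. c \<beta> * mono x \<beta>) has_sum g x) UNIV"
proof -
  obtain r where r: "r > 0" "\<And>x. x \<in> ball 0 r \<Longrightarrow> ((\<lambda>\<beta>. c \<beta> * mono x \<beta>) has_sum g x) UNIV"
    using assms unfolding pseries_rep_def by blast
  define \<rho> where "\<rho> = r / (2 * real CARD('n))"
  have \<rho>: "\<rho> > 0" "\<rho> \<le> r / 2"
    using r by (auto simp: \<rho>_def field_simps)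
  have "norm ((\<chi> i. \<rho>)::real^'n) \<le> (\<Sum>i\<in>(UNIV::'n set). \<bar>\<rho>\<bar>)"
    using norm_le_l1_cart[of "(\<chi> i. \<rho>)::real^'n"] by simp
  also have "\<dots> = r / 2"
    using \<rho> by (simp add: \<rho>_def)
  finally have "(\<chi> i. \<rho>) \<in> ball (0::real^'n) r"
    using r by simp
  from r(2)[OF this] have "((\<lambda>\<beta>. c \<beta> * \<rho> ^ mdeg \<beta>) has_sum g (\<chi> i. \<rho>)) UNIV"
    by (simp only: mono_const)
  then have "(\<lambda>\<beta>. norm (c \<beta> * \<rho> ^ mdeg \<beta>)) summable_on UNIV"
    by (simp only: summable_on_iff_abs_summable_on_real[symmetric] has_sum_imp_summable)
  then have "(\<lambda>\<beta>. \<bar>c \<beta>\<bar> * \<rho> ^ mdeg \<beta>) summable_on UNIV"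
    using \<rho> by (simp add: abs_mult)
  moreover have "((\<lambda>\<beta>. c \<beta> * mono x \<beta>) has_sum g x) UNIV" if "norm x \<le> \<rho>" for x
    using r(2)[of x] that \<rho> by simp
  ultimately show thesis
    by (rule that[OF \<rho>(1)])
qed

text \<open>Every term omitted from the partial sum has degree at least \<open>K\<close>, hence is bounded by
  \<open>(norm x / \<rho>) ^ K\<close> times the corresponding term of the majorant.\<close>
lemma pseries_rep_remainder_bound:
  fixes g :: "real^'n::finite \<Rightarrow> real"
  assumes "pseries_rep c g"
  obtains \<rho> A where "\<rho> > 0" "A \<ge> 0"
    "\<And>K x. norm x \<le> \<rho> \<Longrightarrow>
        \<bar>g x - (\<Sum>\<beta>\<in>{\<beta>. mdeg \<beta> < K}. c \<beta> * mono x \<beta>)\<bar> \<le> A * (norm x / \<rho>) ^ K"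
proof -
  obtain \<rho> where \<rho>: "\<rho> > 0" and sw: "(\<lambda>\<beta>. \<bar>c \<beta>\<bar> * \<rho> ^ mdeg \<beta>) summable_on UNIV"
    and hs: "\<And>x. norm x \<le> \<rho> \<Longrightarrow> ((\<lambda>\<beta>. c \<beta> * mono x \<beta>) has_sum g x) UNIV"
    using pseries_rep_abs_summable[OF assms] by blast
  define A where "A = infsum (\<lambda>\<beta>. \<bar>c \<beta>\<bar> * \<rho> ^ mdeg \<beta>) UNIV"
  have A: "A \<ge> 0"
    unfolding A_def using \<rho> by (intro infsum_nonneg) auto
  have "\<bar>g x - (\<Sum>\<beta>\<in>{\<beta>. mdeg \<beta> < K}. c \<beta> * mono x \<beta>)\<bar> \<le> A * (norm x / \<rho>) ^ K"
    if x: "norm x \<le> \<rho>" for K x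
  proof -
    define L where "L = {\<beta>::'n\<Rightarrow>nat. mdeg \<beta> < K}"
    define q where "q = (norm x / \<rho>) ^ K"
    define \<phi> where "\<phi> = (\<lambda>\<beta>. if \<beta> \<in> L then 0 else c \<beta> * mono x \<beta>)"
    have "((\<lambda>\<beta>. if \<beta> \<in> L then c \<beta> * mono x \<beta> else 0) has_sum (\<Sum>\<beta>\<in>L. c \<beta> * mono x \<beta>)) UNIV"
      unfolding L_def by (rule has_sum_finite_neutralI[OF finite_mdeg_less]) auto
    from has_sum_add[OF hs[OF x] has_sum_uminusI[OF this]]
    have h\<phi>: "(\<phi> has_sum (g x - (\<Sum>\<beta>\<in>L. c \<beta> * mono x \<beta>))) UNIV"
      by (simp add: \<phi>_def if_distrib cong: if_cong)
    have hw: "((\<lambda>\<beta>. q * (\<bar>c \<beta>\<bar> * \<rho> ^ mdeg \<beta>)) has_sum q * A) UNIV"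
      unfolding A_def by (intro has_sum_cmult_right has_sum_infsum sw)
    have "\<bar>\<phi> \<beta>\<bar> \<le> q * (\<bar>c \<beta>\<bar> * \<rho> ^ mdeg \<beta>)" for \<beta>
    proof (cases "\<beta> \<in> L")
      case False
      then have K: "K \<le> mdeg \<beta>" unfolding L_def by simp
      have "\<bar>mono x \<beta>\<bar> \<le> \<rho> ^ mdeg \<beta> * (norm x / \<rho>) ^ mdeg \<beta>"
        using abs_mono_le[of x \<beta>] \<rho> by (simp add: power_divide)
      also have "\<dots> \<le> \<rho> ^ mdeg \<beta> * q"
        unfolding q_def using \<rho> x K by (intro mult_left_mono power_decreasing) auto
      finally have "\<bar>c \<beta>\<bar> * \<bar>mono x \<beta>\<bar> \<le> \<bar>c \<beta>\<bar> * (\<rho> ^ mdeg \<beta> * q)"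
        by (rule mult_left_mono) simp
      then show ?thesis
        using False by (simp add: \<phi>_def abs_mult algebra_simps)
    qed (use \<rho> in \<open>simp add: \<phi>_def q_def\<close>)
    then have bnd: "- (q * (\<bar>c \<beta>\<bar> * \<rho> ^ mdeg \<beta>)) \<le> \<phi> \<beta>" "\<phi> \<beta> \<le> q * (\<bar>c \<beta>\<bar> * \<rho> ^ mdeg \<beta>)" for \<beta>
      by (simp_all add: abs_le_iff minus_le_iff)
    have "g x - (\<Sum>\<beta>\<in>L. c \<beta> * mono x \<beta>) \<le> q * A"
      by (rule has_sum_mono[OF h\<phi> hw]) (use bnd in auto)
    moreover have "- (q * A) \<le> g x - (\<Sum>\<beta>\<in>L. c \<beta> * mono x \<beta>)"
      by (rule has_sum_mono[OF has_sum_uminusI[OF hw] h\<phi>]) (use bnd in auto)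
    ultimately show ?thesis
      unfolding L_def q_def by (simp add: abs_le_iff algebra_simps)
  qed
  with \<rho> A show thesis
    by (rule that)
qed

lemma pseries_rep_order_bounds:
  fixes g :: "real^'n::finite \<Rightarrow> real"
  assumes "pseries_rep c g" and low: "\<forall>\<beta>. mdeg \<beta> < k \<longrightarrow> c \<beta> = 0"
  obtains \<rho> A where "\<rho> > 0" "A \<ge> 0"
    "\<And>x. norm x \<le> \<rho> \<Longrightarrow> \<bar>g x\<bar> \<le> A * (norm x / \<rho>) ^ k"
    "\<And>x. norm x \<le> \<rho> \<Longrightarrow> \<bar>g x - hom_part c k x\<bar> \<le> A * (norm x / \<rho>) ^ Suc k"
proof -
  obtain \<rho> A where \<rho>: "\<rho> > 0" "A \<ge> 0" and rem: "\<And>K x. norm x \<le> \<rho> \<Longrightarrow>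
      \<bar>g x - (\<Sum>\<beta>\<in>{\<beta>. mdeg \<beta> < K}. c \<beta> * mono x \<beta>)\<bar> \<le> A * (norm x / \<rho>) ^ K"
    using pseries_rep_remainder_bound[OF assms(1)] by blast
  show thesis
  proof (rule that[OF \<rho>])
    show "\<bar>g x\<bar> \<le> A * (norm x / \<rho>) ^ k" if "norm x \<le> \<rho>" for x
      using rem[OF that, of k] low by simp
    show "\<bar>g x - hom_part c k x\<bar> \<le> A * (norm x / \<rho>) ^ Suc k" if "norm x \<le> \<rho>" for x
      using rem[OF that, of "Suc k"] by (simp only: sum_mdeg_less_Suc_eq_hom_part[OF low])
  qed
qed

section \<open>Homogeneous forms and simple zeros\<close>

lemma sum_digits_less:
  fixes a :: "nat \<Rightarrow> nat"
  assumes "\<forall>j<n. a j < B"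
  shows "(\<Sum>j<n. a j * B ^ j) < B ^ n"
  using assms
proof (induction n)
  case (Suc n)
  then have "(\<Sum>j<Suc n. a j * B ^ j) < (a n + 1) * B ^ n"
    by simp
  also have "\<dots> \<le> B * B ^ n"
    using Suc.prems by (intro mult_right_mono) auto
  finally show ?case by simp
qed simp

lemma sum_digits_inj:
  fixes a b :: "nat \<Rightarrow> nat"
  assumes "\<forall>j<n. a j < B" "\<forall>j<n. b j < B" "(\<Sum>j<n. a j * B ^ j) = (\<Sum>j<n. b j * B ^ j)"
  shows "\<forall>j<n. a j = b j"
  using assms
proof (induction n)
  case (Suc n)
  have Sa: "(\<Sum>j<n. a j * B ^ j) < B ^ n" and Sb: "(\<Sum>j<n. b j * B ^ j) < B ^ n"
    using Suc.prems by (auto intro!: sum_digits_less)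
  then have "B ^ n > 0"
    by linarith
  have eq: "(\<Sum>j<n. a j * B ^ j) + a n * B ^ n = (\<Sum>j<n. b j * B ^ j) + b n * B ^ n"
    using Suc.prems(3) by simp
  have "a n = b n"
    using arg_cong[OF eq, of "\<lambda>m. m div B ^ n"] Sa Sb \<open>B ^ n > 0\<close> by simp
  moreover have "(\<Sum>j<n. a j * B ^ j) = (\<Sum>j<n. b j * B ^ j)"
    using arg_cong[OF eq, of "\<lambda>m. m mod B ^ n"] Sa Sb by simp
  then have "\<forall>j<n. a j = b j"
    using Suc.prems(1,2) by (intro Suc.IH) auto
  ultimately show ?case
    by (auto simp: less_Suc_eq)
qed simp

lemma kronecker_exponent:
  fixes e :: "'n::finite \<Rightarrow> nat" and k :: nat
  assumes e: "bij_betw e UNIV {..<CARD('n)}"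
  defines "E \<equiv> \<lambda>\<beta>::'n \<Rightarrow> nat. \<Sum>i\<in>UNIV. \<beta> i * Suc k ^ e i"
  shows "inj_on E {\<beta>. mdeg \<beta> = k}" "\<And>\<beta>. mdeg \<beta> = k \<Longrightarrow> E \<beta> \<le> Suc k ^ CARD('n)"
proof -
  define n where "n = CARD('n)"
  define h where "h = inv_into UNIV e"
  have he: "h (e i) = i" for i
    unfolding h_def using e by (simp add: bij_betw_def inv_into_f_f)
  have E_digits: "E \<beta> = (\<Sum>j<n. \<beta> (h j) * Suc k ^ j)" for \<beta>
    unfolding E_def n_def using sum.reindex_bij_betw[OF e, of "\<lambda>j. \<beta> (h j) * Suc k ^ j"] by (simp add: he)
  have digit_less: "\<forall>j<n. \<beta> (h j) < Suc k" if "mdeg \<beta> = k" for \<beta>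
    using that member_le_sum[of _ UNIV \<beta>] unfolding mdeg_def by (auto simp: less_Suc_eq_le)
  show "inj_on E {\<beta>. mdeg \<beta> = k}"
  proof (rule inj_onI, rule ext)
    fix \<beta> \<beta>' i
    assume \<beta>: "\<beta> \<in> {\<beta>. mdeg \<beta> = k}" and \<beta>': "\<beta>' \<in> {\<beta>. mdeg \<beta> = k}" and "E \<beta> = E \<beta>'"
    then have "\<forall>j<n. \<beta> (h j) = \<beta>' (h j)"
      using digit_less by (intro sum_digits_inj) (simp_all only: E_digits mem_Collect_eq)
    moreover have "e i < n"
      using e unfolding n_def by (auto simp: bij_betw_def)
    ultimately show "\<beta> i = \<beta>' i"
      by (metis he)
  qed
  show "E \<beta> \<le> Suc k ^ CARD('n)" if "mdeg \<beta> = k" for \<beta>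
    unfolding E_digits n_def[symmetric] using sum_digits_less[OF digit_less[OF that]] by simp
qed

text \<open>Kronecker substitution \<open>x\<^sub>i = t ^ (k + 1) ^ e i\<close> sends distinct multi-indices of degree \<open>k\<close>
  to distinct powers of \<open>t\<close>, turning \<open>hom_part c k\<close> into a nonzero univariate polynomial.\<close>
lemma hom_part_nonzero:
  fixes c :: "('n::finite \<Rightarrow> nat) \<Rightarrow> real"
  assumes "mdeg \<beta>0 = k" "c \<beta>0 \<noteq> 0"
  shows "\<exists>u. hom_part c k u \<noteq> 0"
proof -
  define n where "n = CARD('n)"
  obtain e :: "'n \<Rightarrow> nat" where e: "bij_betw e UNIV {..<n}"
    using ex_bij_betw_finite_nat[of "UNIV :: 'n set"] unfolding n_def atLeast0LessThan by auto
  define B where "B = Suc k"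
  define E where "E = (\<lambda>\<beta>::'n\<Rightarrow>nat. \<Sum>i\<in>UNIV. \<beta> i * B ^ e i)"
  define S where "S = {\<beta>::'n\<Rightarrow>nat. mdeg \<beta> = k}"
  have E_inj: "inj_on E S" and E_le: "\<And>\<beta>. \<beta> \<in> S \<Longrightarrow> E \<beta> \<le> B ^ n"
    using kronecker_exponent[OF e[unfolded n_def]] unfolding E_def S_def B_def n_def by auto
  define a where "a = (\<lambda>m. \<Sum>\<beta>\<in>{\<beta>\<in>S. E \<beta> = m}. c \<beta>)"
  have mono_subst: "mono ((\<chi> i. t ^ (B ^ e i))::real^'n) \<beta> = t ^ E \<beta>" for t \<beta>
    unfolding mono_def E_def by (simp add: power_sum mult.commute flip: power_mult)
  have poly: "hom_part c k (\<chi> i. t ^ (B ^ e i)) = (\<Sum>m\<le>B ^ n. a m * t ^ m)" for t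
  proof -
    have "hom_part c k (\<chi> i. t ^ (B ^ e i)) = (\<Sum>\<beta>\<in>S. c \<beta> * t ^ E \<beta>)"
      unfolding hom_part_def S_def mono_subst ..
    also have "\<dots> = (\<Sum>m\<le>B ^ n. \<Sum>\<beta>\<in>{\<beta>\<in>S. E \<beta> = m}. c \<beta> * t ^ E \<beta>)"
      by (rule sum.group[symmetric]) (use finite_mdeg_eq E_le in \<open>auto simp: S_def\<close>)
    also have "\<dots> = (\<Sum>m\<le>B ^ n. a m * t ^ m)"
      unfolding a_def sum_distrib_right by (intro sum.cong refl) auto
    finally show ?thesis .
  qed
  have "\<beta>0 \<in> S"
    using assms unfolding S_def by simp
  then have "{\<beta>\<in>S. E \<beta> = E \<beta>0} = {\<beta>0}" and "E \<beta>0 \<le> B ^ n"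
    using E_inj E_le by (auto dest: inj_onD)
  then have "\<not> (\<forall>m\<le>B ^ n. a m = 0)"
    using assms(2) unfolding a_def by force
  then obtain t where "(\<Sum>m\<le>B ^ n. a m * t ^ m) \<noteq> 0"
    using polyfun_eq_0[where n="B ^ n" and c=a] by auto
  then show ?thesis
    using poly by metis
qed

lemma hom_part_nonzero_away_from_0:
  fixes c :: "('n::finite \<Rightarrow> nat) \<Rightarrow> real"
  assumes "mdeg \<beta>0 = k" "c \<beta>0 \<noteq> 0"
  obtains u where "u \<noteq> 0" "hom_part c k u \<noteq> 0"
proof -
  obtain u0 where u0: "hom_part c k u0 \<noteq> 0"
    using hom_part_nonzero[of \<beta>0 k c] assms by blast
  show thesis
  proof (cases "u0 = 0")
    case False
    then show thesis
      using u0 by (rule that)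
  next
    case True
    obtain i :: 'n where True by blast
    have "axis i 1 \<noteq> (0::real^'n)"
      by (simp add: axis_eq_0_iff)
    moreover have "hom_part c k (axis i 1) \<noteq> 0"
      using hom_part_scaleR[of c k 0 "axis i 1"] u0 True by auto
    ultimately show thesis
      by (rule that)
  qed
qed

lemma pseries_coeff_leading_form:
  fixes c :: "('n::finite \<Rightarrow> nat) \<Rightarrow> real"
  assumes "c \<beta>0 \<noteq> 0"
  obtains k u where "k \<le> mdeg \<beta>0" "\<forall>\<beta>. mdeg \<beta> < k \<longrightarrow> c \<beta> = 0" "u \<noteq> 0" "hom_part c k u \<noteq> 0"
proof -
  define k where "k = (LEAST k. \<exists>\<beta>. mdeg \<beta> = k \<and> c \<beta> \<noteq> 0)"
  have "\<exists>\<beta>. mdeg \<beta> = k \<and> c \<beta> \<noteq> 0"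
    unfolding k_def by (rule LeastI[of _ "mdeg \<beta>0"]) (use assms in auto)
  then obtain \<beta>k where "mdeg \<beta>k = k" "c \<beta>k \<noteq> 0"
    by blast
  then obtain u where "u \<noteq> 0" "hom_part c k u \<noteq> 0"
    using hom_part_nonzero_away_from_0 by blast
  moreover have "\<forall>\<beta>. mdeg \<beta> < k \<longrightarrow> c \<beta> = 0"
    unfolding k_def using not_less_Least by blast
  moreover have "k \<le> mdeg \<beta>0"
    unfolding k_def by (rule Least_le) (use assms in auto)
  ultimately show thesis
    using that by blast
qed

text \<open>By homogeneity it suffices to bound \<open>\<bar>hom_part c d\<bar>\<close> on the unit sphere, where it attains a
  positive minimum.\<close>
lemma hom_part_lower_bound:
  fixes c :: "('n::finite \<Rightarrow> nat) \<Rightarrow> real"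
  assumes simple: "\<forall>x. x \<noteq> 0 \<longrightarrow> hom_part c d x \<noteq> 0"
  obtains m where "m > 0" "\<And>x. m * norm x ^ d \<le> \<bar>hom_part c d x\<bar>"
proof -
  obtain i :: 'n where True by blast
  have "axis i 1 \<in> sphere (0::real^'n) 1"
    by simp
  moreover have "continuous_on (sphere 0 1) (\<lambda>x. \<bar>hom_part c d x\<bar>)"
    by (intro continuous_intros continuous_on_hom_part)
  ultimately obtain u where u: "u \<in> sphere 0 1"
    and min: "\<And>y. y \<in> sphere 0 1 \<Longrightarrow> \<bar>hom_part c d u\<bar> \<le> \<bar>hom_part c d y\<bar>"
    using continuous_attains_inf[OF compact_sphere] by blast
  have "u \<noteq> 0"
    using u by auto
  with simple have "\<bar>hom_part c d u\<bar> > 0"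
    by simp
  moreover have "\<bar>hom_part c d u\<bar> * norm x ^ d \<le> \<bar>hom_part c d x\<bar>" for x
  proof (cases "x = 0")
    case True
    then have "hom_part c d x = 0 ^ d * hom_part c d u"
      using hom_part_scaleR[of c d 0 u] by simp
    then show ?thesis
      using True by (cases d) auto
  next
    case False
    define y where "y = (1 / norm x) *\<^sub>R x"
    have y: "y \<in> sphere 0 1"
      using False by (simp add: y_def)
    have "hom_part c d x = hom_part c d (norm x *\<^sub>R y)"
      using False by (simp add: y_def)
    then have "\<bar>hom_part c d x\<bar> = norm x ^ d * \<bar>hom_part c d y\<bar>"
      by (simp add: hom_part_scaleR abs_mult)
    then show ?thesis
      using min[OF y] by (simp add: mult.commute mult_left_mono)
  qed
  ultimately show thesis
    by (rule that)
qed

lemma hom_part_lower_bound_near_ray: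
  fixes c :: "('n::finite \<Rightarrow> nat) \<Rightarrow> real"
  assumes "hom_part c k u \<noteq> 0"
  obtains \<rho> \<delta> where "\<rho> > 0" "\<delta> > 0"
    "\<And>l x. 0 < l \<Longrightarrow> x \<in> ball (l *\<^sub>R u) (l * \<rho>) \<Longrightarrow> \<delta> * l ^ k \<le> \<bar>hom_part c k x\<bar>"
proof -
  define \<delta> where "\<delta> = \<bar>hom_part c k u\<bar> / 2"
  have \<delta>: "\<delta> > 0"
    unfolding \<delta>_def using assms by simp
  have "continuous_on UNIV (hom_part c k)"
    by (rule continuous_on_hom_part)
  then obtain \<rho> where \<rho>: "\<rho> > 0" "\<And>y. dist y u < \<rho> \<Longrightarrow> dist (hom_part c k y) (hom_part c k u) < \<delta>"
    unfolding continuous_on_iff using \<delta> by blast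
  have "\<delta> * l ^ k \<le> \<bar>hom_part c k x\<bar>" if l: "0 < l" and x: "x \<in> ball (l *\<^sub>R u) (l * \<rho>)" for l x
  proof -
    define y where "y = (1 / l) *\<^sub>R x"
    have xy: "x = l *\<^sub>R y"
      unfolding y_def using l by simp
    have "x - l *\<^sub>R u = l *\<^sub>R (y - u)"
      unfolding xy by (simp add: algebra_simps)
    then have "l * dist y u < l * \<rho>"
      using x l by (simp add: dist_norm norm_minus_commute)
    then have "\<bar>hom_part c k y - hom_part c k u\<bar> < \<delta>"
      using \<rho>(2)[of y] l unfolding dist_real_def by simp
    then have "\<delta> \<le> \<bar>hom_part c k y\<bar>"
      using abs_triangle_ineq3[of "hom_part c k y" "hom_part c k u"] unfolding \<delta>_def by linarith
    then show ?thesis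
      using l unfolding xy hom_part_scaleR by (simp add: abs_mult mult_left_mono mult.commute)
  qed
  with \<rho>(1) \<delta> show thesis
    by (rule that)
qed

lemma pseries_rep_simple_zero_bounds:
  fixes f :: "real^'n::finite \<Rightarrow> real"
  assumes rep: "pseries_rep c f"
    and lower_zero: "\<forall>\<beta>. mdeg \<beta> < d \<longrightarrow> c \<beta> = 0"
    and simple: "\<forall>x. x \<noteq> 0 \<longrightarrow> hom_part c d x \<noteq> 0"
  obtains r m M where "r > 0" "m > 0" "M > 0"
    "\<And>x. norm x \<le> r \<Longrightarrow> m * norm x ^ d \<le> \<bar>f x\<bar>"
    "\<And>x. norm x \<le> r \<Longrightarrow> \<bar>f x\<bar> \<le> M * norm x ^ d"
proof -
  obtain \<rho> A where \<rho>: "\<rho> > 0" "A \<ge> 0"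
    and upper: "\<And>x. norm x \<le> \<rho> \<Longrightarrow> \<bar>f x\<bar> \<le> A * (norm x / \<rho>) ^ d"
    and rem: "\<And>x. norm x \<le> \<rho> \<Longrightarrow> \<bar>f x - hom_part c d x\<bar> \<le> A * (norm x / \<rho>) ^ Suc d"
    using pseries_rep_order_bounds[OF rep lower_zero] by blast
  obtain m where m: "m > 0" and hom: "\<And>x. m * norm x ^ d \<le> \<bar>hom_part c d x\<bar>"
    using hom_part_lower_bound[OF simple] by blast
  define r where "r = min \<rho> (m * \<rho> ^ Suc d / (2 * (A + 1)))"
  have r: "r > 0" "r \<le> \<rho>"
    unfolding r_def using \<rho> m by auto
  define M where "M = (A + 1) / \<rho> ^ d"
  have M: "M > 0"
    unfolding M_def using \<rho> by auto
  show thesis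
  proof (rule that[OF r(1) half_gt_zero[OF m] M])
    fix x :: "real^'n"
    assume x: "norm x \<le> r"
    have "A * norm x \<le> (A + 1) * r"
      using x \<rho> by (intro mult_mono) auto
    also have "\<dots> \<le> (A + 1) * (m * \<rho> ^ Suc d / (2 * (A + 1)))"
      unfolding r_def using \<rho> by (intro mult_left_mono) auto
    also have "\<dots> = m / 2 * \<rho> ^ Suc d"
      using \<rho> by (simp add: field_simps)
    finally have "A * norm x / \<rho> ^ Suc d \<le> m / 2"
      using \<rho> by (simp add: field_simps)
    then have "A * norm x / \<rho> ^ Suc d * norm x ^ d \<le> m / 2 * norm x ^ d"
      by (rule mult_right_mono) simp
    then have "A * (norm x / \<rho>) ^ Suc d \<le> m / 2 * norm x ^ d"
      by (simp add: power_divide)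
    then show "m / 2 * norm x ^ d \<le> \<bar>f x\<bar>"
      using rem[of x] hom[of x] x r by linarith
    have "A * (norm x / \<rho>) ^ d \<le> (A + 1) * (norm x / \<rho>) ^ d"
      using \<rho> by (intro mult_right_mono) auto
    then show "\<bar>f x\<bar> \<le> M * norm x ^ d"
      using upper[of x] x r by (simp add: M_def power_divide)
  qed
qed

lemma pseries_rep_simple_zero_order_pos:
  fixes f :: "real^'n::finite \<Rightarrow> real"
  assumes "pseries_rep c f" "\<forall>x. x \<noteq> 0 \<longrightarrow> hom_part c d x \<noteq> 0" "f 0 = 0"
  shows "d > 0"
proof (rule ccontr)
  assume "\<not> d > 0"
  obtain i :: 'n where True by blast
  have "hom_part c 0 (axis i 1) = f 0"
    by (simp add: hom_part_0 pseries_rep_at_0[OF assms(1)])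
  with assms(2,3) \<open>\<not> d > 0\<close> show False
    by (auto simp: axis_eq_0_iff)
qed

section \<open>Integrability near the origin\<close>

lemma emeasure_lebesgue_ball:
  fixes a :: "real^'n::finite"
  assumes "r \<ge> 0"
  shows "emeasure lebesgue (ball a r) = ennreal (unit_ball_vol (real CARD('n)) * r ^ CARD('n))"
  using emeasure_ball[OF assms, of a] by simp

lemma exists_dyadic_shell:
  fixes R s :: real
  assumes "0 < s" "s < R"
  obtains j :: nat where "R / 2 ^ Suc j \<le> s" "s < R / 2 ^ j"
proof -
  obtain N :: nat where "R / s < 2 ^ N"
    using real_arch_pow[of 2 "R / s"] by auto
  then have N: "R / 2 ^ N \<le> s"
    using assms by (simp add: field_simps)
  define m where "m = (LEAST m::nat. R / 2 ^ m \<le> s)"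
  have m: "R / 2 ^ m \<le> s"
    unfolding m_def by (rule LeastI[of _ N]) (rule N)
  then obtain j where j: "m = Suc j"
    using assms by (cases m) auto
  then have "\<not> R / 2 ^ j \<le> s"
    using not_less_Least[of j "\<lambda>m. R / 2 ^ m \<le> s"] unfolding m_def by auto
  with m j show thesis
    using that by auto
qed

lemma summable_dyadic_shell_bounds:
  assumes "R > 0" "0 \<le> t" "t < real n"
  shows "summable (\<lambda>j::nat. (R / 2 ^ Suc j) powr (- t) * (R / 2 ^ j) ^ n)"
proof (rule summable_ratio_test[of "2 powr t / 2 ^ n" 0])
  have "2 powr t < 2 powr (real n)"
    using assms by (intro powr_less_mono) auto
  then show "2 powr t / 2 ^ n < 1"
    by (simp add: powr_realpow)
  fix j :: nat
  have half: "(a / 2) powr (- t) = 2 powr t * a powr (- t)" if "a > 0" for a :: real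
  proof -
    have "(a / 2) powr (- t) = a powr (- t) / 2 powr (- t)"
      using that by (auto intro: powr_divide)
    also have "2 powr (- t) = inverse (2 powr t)"
      by (rule powr_minus)
    finally show ?thesis
      by (simp add: field_simps)
  qed
  have "R / 2 ^ Suc (Suc j) = (R / 2 ^ Suc j) / 2"
    by simp
  then have "(R / 2 ^ Suc (Suc j)) powr (- t) = 2 powr t * (R / 2 ^ Suc j) powr (- t)"
    using half[of "R / 2 ^ Suc j"] assms(1) by simp
  moreover have "(R / 2 ^ Suc j) ^ n = (R / 2 ^ j) ^ n / 2 ^ n"
    by (simp add: power_divide power_mult_distrib field_simps)
  ultimately show "norm ((R / 2 ^ Suc (Suc j)) powr (- t) * (R / 2 ^ Suc j) ^ n)
      \<le> 2 powr t / 2 ^ n * norm ((R / 2 ^ Suc j) powr (- t) * (R / 2 ^ j) ^ n)"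
    using assms(1) by simp
qed

text \<open>Split the ball into dyadic shells: on the \<open>j\<close>-th shell \<open>\<bar>h\<bar>\<close> is at most a constant times
  \<open>(R / 2 ^ Suc j) powr (- t)\<close>, while its volume is \<open>O((R / 2 ^ j) ^ n)\<close>.\<close>
lemma absolutely_integrable_on_ball_if_norm_powr_neg_bound:
  fixes h :: "real^'n::finite \<Rightarrow> real"
  assumes R: "R > 0" and C: "C \<ge> 0" and t: "0 \<le> t" "t < real CARD('n)"
    and bound: "\<And>x. norm x < R \<Longrightarrow> x \<noteq> 0 \<Longrightarrow> \<bar>h x\<bar> \<le> C * norm x powr (- t)"
    and h0: "h 0 = 0"
    and meas: "(\<lambda>x. indicator (ball 0 R) x * h x) \<in> borel_measurable lebesgue"
  shows "h absolutely_integrable_on ball 0 R"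
proof -
  define n where "n = CARD('n)"
  define V where "V = unit_ball_vol (real n)"
  define A where "A = (\<lambda>j::nat. ball (0::real^'n) (R / 2 ^ j) - ball 0 (R / 2 ^ Suc j))"
  define b where "b = (\<lambda>j::nat. C * (R / 2 ^ Suc j) powr (- t))"
  have b: "b j \<ge> 0" for j
    unfolding b_def using C by simp
  have A: "A j \<in> sets lebesgue" for j
    unfolding A_def by simp
  have pointwise: "ennreal (norm (indicator (ball 0 R) x *\<^sub>R h x)) \<le> (\<Sum>j. ennreal (b j) * indicator (A j) x)"
    for x
  proof (cases "x \<in> ball 0 R \<and> x \<noteq> 0")
    case True
    then obtain j where j: "R / 2 ^ Suc j \<le> norm x" "norm x < R / 2 ^ j"
      using exists_dyadic_shell[of "norm x" R] by auto
    have "norm (indicator (ball 0 R) x *\<^sub>R h x) \<le> C * norm x powr (- t)"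
      using True bound by simp
    also have "\<dots> \<le> b j"
      unfolding b_def using C t j R by (intro mult_left_mono powr_mono2') auto
    finally have "ennreal (norm (indicator (ball 0 R) x *\<^sub>R h x)) \<le> ennreal (b j) * indicator (A j) x"
      using j by (simp add: A_def ennreal_leI)
    also have "\<dots> = (\<Sum>i\<in>{j}. ennreal (b i) * indicator (A i) x)"
      by (subst sum.insert) simp_all
    also have "\<dots> \<le> (\<Sum>i. ennreal (b i) * indicator (A i) x)"
      by (rule sum_le_suminf) auto
    finally show ?thesis .
  qed (use h0 in \<open>auto simp: indicator_def\<close>)
  define g where "g = (\<lambda>j::nat. b j * (V * (R / 2 ^ j) ^ n))"
  have g: "g j \<ge> 0" for j
    unfolding g_def V_def using b R by simp
  have "summable g"
    using summable_mult[OF summable_dyadic_shell_bounds[OF R t[unfolded n_def[symmetric]]], of "C * V"]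
    by (simp add: g_def b_def algebra_simps)
  have "(\<integral>\<^sup>+x. ennreal (norm (indicator (ball 0 R) x *\<^sub>R h x)) \<partial>lebesgue)
        \<le> (\<integral>\<^sup>+x. (\<Sum>j. ennreal (b j) * indicator (A j) x) \<partial>lebesgue)"
    by (rule nn_integral_mono) (rule pointwise)
  also have "\<dots> = (\<Sum>j. ennreal (b j) * emeasure lebesgue (A j))"
    using A by (simp add: nn_integral_suminf nn_integral_cmult_indicator)
  also have "\<dots> \<le> (\<Sum>j. ennreal (g j))"
  proof (intro suminf_le)
    fix j
    have "emeasure lebesgue (A j) \<le> emeasure lebesgue (ball (0::real^'n) (R / 2 ^ j))"
      unfolding A_def by (intro emeasure_mono) auto
    also have "\<dots> = ennreal (V * (R / 2 ^ j) ^ n)"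
      unfolding V_def n_def using R by (intro emeasure_lebesgue_ball) simp
    finally show "ennreal (b j) * emeasure lebesgue (A j) \<le> ennreal (g j)"
      unfolding g_def using b[of j] by (simp add: ennreal_mult' mult_left_mono)
  qed auto
  also have "\<dots> < \<infinity>"
    using ennreal_suminf_neq_top[OF \<open>summable g\<close> g] by (simp add: less_top)
  finally have "integrable lebesgue (\<lambda>x. indicator (ball 0 R) x *\<^sub>R h x)"
    using meas by (simp add: integrable_iff_bounded)
  then show ?thesis
    unfolding set_integrable_def .
qed

lemma absolutely_integrable_on_ball_if_norm_powr_bound:
  fixes h :: "real^'n::finite \<Rightarrow> real"
  assumes R: "R > 0" and C: "C \<ge> 0" and e: "- real CARD('n) < e"
    and bound: "\<And>x. norm x < R \<Longrightarrow> x \<noteq> 0 \<Longrightarrow> \<bar>h x\<bar> \<le> C * norm x powr e"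
    and h0: "h 0 = 0"
    and meas: "(\<lambda>x. indicator (ball 0 R) x * h x) \<in> borel_measurable lebesgue"
  shows "h absolutely_integrable_on ball 0 R"
proof -
  define t where "t = max 0 (- e)"
  have t: "0 \<le> t" "t < real CARD('n)"
    unfolding t_def using e by auto
  have "\<bar>h x\<bar> \<le> C * R powr (e + t) * norm x powr (- t)" if x: "norm x < R" "x \<noteq> 0" for x
  proof -
    have "norm x powr e \<le> R powr (e + t) * norm x powr (- t)"
    proof (cases "e \<ge> 0")
      case True
      then show ?thesis
        using x by (simp add: t_def powr_mono2)
    next
      case False
      then show ?thesis
        using R by (simp add: t_def)
    qed
    then show ?thesis
      using bound[OF x] C by (metis mult.assoc mult_left_mono order_trans)
  qed
  moreover have "C * R powr (e + t) \<ge> 0"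
    using C by simp
  ultimately show ?thesis
    using absolutely_integrable_on_ball_if_norm_powr_neg_bound[OF R _ t _ h0 meas] by blast
qed

lemma not_absolutely_integrable_on_disjoint_family:
  fixes h :: "'a::euclidean_space \<Rightarrow> real" and S :: "nat \<Rightarrow> 'a set"
  assumes disj: "disjoint_family S" and S: "\<And>i. S i \<in> sets lebesgue" "\<And>i. S i \<subseteq> U"
    and lower: "\<And>i x. x \<in> S i \<Longrightarrow> a i \<le> \<bar>h x\<bar>"
    and mass: "\<And>i. ennreal \<delta> \<le> ennreal (a i) * emeasure lebesgue (S i)" and \<delta>: "\<delta> > 0"
  shows "\<not> h absolutely_integrable_on U"
proof
  assume "h absolutely_integrable_on U"
  then have int: "integrable lebesgue (\<lambda>x. indicator U x *\<^sub>R h x)"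
    unfolding set_integrable_def .
  have pointwise: "(\<Sum>i. ennreal (a i) * indicator (S i) x) \<le> ennreal (norm (indicator U x *\<^sub>R h x))" for x
  proof (cases "\<exists>i. x \<in> S i")
    case True
    then obtain i where x: "x \<in> S i" ..
    have "(\<Sum>i. ennreal (a i) * indicator (S i) x) = ennreal (a i)"
      by (rule suminf_cmult_indicator[OF disj x])
    also have "\<dots> \<le> ennreal (norm (indicator U x *\<^sub>R h x))"
      using lower[OF x] S(2)[of i] x by (intro ennreal_leI) auto
    finally show ?thesis .
  qed simp
  have "(\<Sum>i. ennreal \<delta>) \<le> (\<Sum>i. ennreal (a i) * emeasure lebesgue (S i))"
    by (intro suminf_le mass) auto
  also have "\<dots> = (\<Sum>i. \<integral>\<^sup>+x. ennreal (a i) * indicator (S i) x \<partial>lebesgue)"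
    by (intro suminf_cong nn_integral_cmult_indicator[symmetric] S(1))
  also have "\<dots> = (\<integral>\<^sup>+x. (\<Sum>i. ennreal (a i) * indicator (S i) x) \<partial>lebesgue)"
    by (rule nn_integral_suminf[symmetric]) (use S(1) in auto)
  also have "\<dots> \<le> (\<integral>\<^sup>+x. ennreal (norm (indicator U x *\<^sub>R h x)) \<partial>lebesgue)"
    by (intro nn_integral_mono pointwise)
  also have "\<dots> < \<infinity>"
    using int by (simp add: integrable_iff_bounded)
  finally have "(\<Sum>i. ennreal \<delta>) \<noteq> top"
    by (simp add: infinity_ennreal_def)
  moreover have "(\<Sum>i. ennreal \<delta>) = top"
    by (rule summable_iff_suminf_neq_top) (use \<delta> in \<open>auto simp: summable_const_iff\<close>)
  ultimately show False
    by contradiction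
qed

lemma norm_in_scaled_ball:
  fixes u x :: "'a::real_normed_vector"
  assumes "x \<in> ball (l *\<^sub>R u) (l * \<rho>)" "l > 0" "\<rho> \<le> norm u / 2"
  shows "l * norm u / 2 < norm x" "norm x < 3 * (l * norm u) / 2"
proof -
  have "norm (x - l *\<^sub>R u) < l * \<rho>"
    using assms(1) by (simp add: dist_norm norm_minus_commute)
  moreover have "l * \<rho> \<le> l * (norm u / 2)"
    using assms(2,3) by (intro mult_left_mono) auto
  moreover have "l * norm u - norm x \<le> norm (x - l *\<^sub>R u)"
    using norm_triangle_ineq2[of "l *\<^sub>R u" x] assms(2) by (simp add: norm_minus_commute)
  moreover have "norm x - l * norm u \<le> norm (x - l *\<^sub>R u)"
    using norm_triangle_ineq2[of x "l *\<^sub>R u"] assms(2) by simp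
  ultimately show "l * norm u / 2 < norm x" "norm x < 3 * (l * norm u) / 2"
    by linarith+
qed

lemma disjoint_family_geometric_balls:
  fixes u :: "'a::real_normed_vector"
  assumes \<rho>: "\<rho> \<le> norm u / 2"
  shows "disjoint_family (\<lambda>i::nat. ball (((1/4) ^ (i + J)) *\<^sub>R u) ((1/4) ^ (i + J) * \<rho>))"
proof -
  define l where "l i = (1/4::real) ^ (i + J)" for i
  have l_pos: "0 < l i" for i
    by (simp add: l_def)
  have "ball (l i *\<^sub>R u) (l i * \<rho>) \<inter> ball (l j *\<^sub>R u) (l j * \<rho>) = {}" if "i < j" for i j
  proof (rule ccontr)
    assume "ball (l i *\<^sub>R u) (l i * \<rho>) \<inter> ball (l j *\<^sub>R u) (l j * \<rho>) \<noteq> {}"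
    then obtain x where x: "x \<in> ball (l i *\<^sub>R u) (l i * \<rho>)" "x \<in> ball (l j *\<^sub>R u) (l j * \<rho>)"
      by blast
    have "l j \<le> l (Suc i)"
      unfolding l_def using that by (intro power_decreasing) auto
    then have "l j * norm u \<le> l i * norm u / 4"
      using mult_right_mono[of "l j" "l (Suc i)" "norm u"] by (simp add: l_def)
    moreover have "l i * norm u \<ge> 0"
      using l_pos[of i] by simp
    ultimately show False
      using norm_in_scaled_ball(1)[OF x(1) l_pos \<rho>] norm_in_scaled_ball(2)[OF x(2) l_pos \<rho>] by linarith
  qed
  then show ?thesis
    unfolding disjoint_family_on_def l_def[symmetric] by (metis Int_commute linorder_neqE_nat)
qed

lemma emeasure_scaled_ball_lower_bound:
  fixes u :: "real^'n::finite"
  assumes l: "0 < l" "l \<le> 1" and \<rho>: "0 < \<rho>" and \<kappa>: "\<kappa> > 0" and e: "e + real CARD('n) \<le> 0"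
  shows "ennreal (\<kappa> * unit_ball_vol (real CARD('n)) * \<rho> ^ CARD('n))
    \<le> ennreal (\<kappa> * l powr e) * emeasure lebesgue (ball (l *\<^sub>R u) (l * \<rho>))"
proof -
  define n where "n = CARD('n)"
  define V where "V = unit_ball_vol (real n)"
  have "1 \<le> l powr (e + real n)"
    using powr_mono2'[of "e + real n" l 1] l e unfolding n_def by simp
  then have "\<kappa> * V * \<rho> ^ n * 1 \<le> \<kappa> * V * \<rho> ^ n * l powr (e + real n)"
    using \<kappa> \<rho> by (intro mult_left_mono) (auto simp: V_def)
  also have "\<dots> = \<kappa> * l powr e * (V * (l * \<rho>) ^ n)"
    using l by (simp add: powr_add powr_realpow power_mult_distrib)
  finally have "ennreal (\<kappa> * V * \<rho> ^ n) \<le> ennreal (\<kappa> * l powr e) * ennreal (V * (l * \<rho>) ^ n)"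
    using \<kappa> \<rho> l by (simp add: ennreal_mult'[symmetric] V_def ennreal_leI)
  also have "ennreal (V * (l * \<rho>) ^ n) = emeasure lebesgue (ball (l *\<^sub>R u) (l * \<rho>))"
    unfolding V_def n_def using \<rho> l by (intro emeasure_lebesgue_ball[symmetric]) simp
  finally show ?thesis
    unfolding V_def n_def .
qed

text \<open>The balls \<open>ball (l *\<^sub>R u) (l * \<rho>)\<close> for \<open>l = 4 ^ -i\<close> are disjoint and have volume \<open>\<sim> l ^ n\<close>,
  so a lower bound \<open>\<kappa> * l powr e\<close> with \<open>e \<le> -n\<close> contributes at least a fixed amount on each.\<close>
lemma not_loc_integrable0_if_bounded_below_on_scaled_balls:
  fixes h :: "real^'n::finite \<Rightarrow> real"
  assumes u: "u \<noteq> 0" and \<rho>: "0 < \<rho>" "\<rho> \<le> norm u / 2" and \<kappa>: "\<kappa> > 0"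
    and e: "e + real CARD('n) \<le> 0" and l0: "l0 > 0"
    and lower: "\<And>l x. 0 < l \<Longrightarrow> l < l0 \<Longrightarrow> x \<in> ball (l *\<^sub>R u) (l * \<rho>) \<Longrightarrow> \<kappa> * l powr e \<le> \<bar>h x\<bar>"
  shows "\<not> loc_integrable0 h"
proof
  assume "loc_integrable0 h"
  then obtain U where U: "open U" "0 \<in> U" "h absolutely_integrable_on U"
    unfolding loc_integrable0_def by blast
  obtain \<epsilon> where \<epsilon>: "\<epsilon> > 0" "ball 0 \<epsilon> \<subseteq> U"
    using U open_contains_ball by blast
  obtain J where J: "(1/4::real) ^ J < min l0 (\<epsilon> / (2 * norm u))"
    using real_arch_pow_inv[of "min l0 (\<epsilon> / (2 * norm u))" "1/4"] u \<epsilon> l0 by auto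
  define l where "l = (\<lambda>i::nat. (1/4::real) ^ (i + J))"
  have l_pos: "0 < l i" and l_le_1: "l i \<le> 1" for i
    unfolding l_def by (auto intro: power_le_one)
  have l_small: "l i < l0" "3 * (l i * norm u) / 2 < \<epsilon>" for i
  proof -
    have "l i \<le> (1/4) ^ J"
      unfolding l_def by (intro power_decreasing) auto
    with J have "l i < l0" and "l i < \<epsilon> / (2 * norm u)"
      by auto
    moreover from this(2) have "l i * norm u < \<epsilon> / 2"
      using u by (simp add: field_simps)
    moreover have "l i * norm u \<ge> 0"
      using l_pos[of i] by simp
    ultimately show "l i < l0" "3 * (l i * norm u) / 2 < \<epsilon>"
      by linarith+
  qed
  define S where "S = (\<lambda>i. ball (l i *\<^sub>R u) (l i * \<rho>))"
  define n where "n = CARD('n)"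
  define V where "V = unit_ball_vol (real n)"
  have "\<not> h absolutely_integrable_on U"
  proof (rule not_absolutely_integrable_on_disjoint_family[of S])
    show "disjoint_family S"
      unfolding S_def l_def by (rule disjoint_family_geometric_balls[OF \<rho>(2)])
    show "S i \<in> sets lebesgue" for i
      by (simp add: S_def)
    show "S i \<subseteq> U" for i
    proof
      fix x
      assume "x \<in> S i"
      then have "norm x < \<epsilon>"
        using norm_in_scaled_ball(2)[of x "l i" u \<rho>] l_pos[of i] \<rho>(2) l_small(2)[of i]
        unfolding S_def by linarith
      with \<epsilon>(2) show "x \<in> U"
        by auto
    qed
    show "\<kappa> * l i powr e \<le> \<bar>h x\<bar>" if "x \<in> S i" for i x
      using lower[OF l_pos l_small(1)] that unfolding S_def by blast
    show "ennreal (\<kappa> * V * \<rho> ^ n) \<le> ennreal (\<kappa> * l i powr e) * emeasure lebesgue (S i)" for i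
      unfolding S_def V_def n_def by (intro emeasure_scaled_ball_lower_bound l_pos l_le_1 \<rho>(1) \<kappa> e)
    show "\<kappa> * V * \<rho> ^ n > 0"
      using \<kappa> \<rho> by (simp add: V_def)
  qed
  with U(3) show False
    by contradiction
qed

section \<open>Integrability of quotients by a function with a simple zero\<close>

lemma tendsto_sum_mdeg_le:
  assumes "((\<lambda>\<beta>. c \<beta> * mono (x::real^'n::finite) \<beta>) has_sum y) UNIV"
  shows "(\<lambda>N. \<Sum>\<beta>\<in>{\<beta>. mdeg \<beta> \<le> N}. c \<beta> * mono x \<beta>) \<longlonglongrightarrow> y"
proof -
  have lim: "((\<lambda>F. \<Sum>\<beta>\<in>F. c \<beta> * mono x \<beta>) \<longlongrightarrow> y) (finite_subsets_at_top UNIV)"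
    using assms unfolding has_sum_def .
  have "filterlim (\<lambda>N. {\<beta>::'n\<Rightarrow>nat. mdeg \<beta> \<le> N}) (finite_subsets_at_top UNIV) sequentially"
    unfolding filterlim_finite_subsets_at_top
  proof (intro allI impI)
    fix X :: "('n \<Rightarrow> nat) set"
    assume X: "finite X \<and> X \<subseteq> UNIV"
    have "X \<subseteq> {\<beta>. mdeg \<beta> \<le> N}" if "N \<ge> Max (mdeg ` X)" for N
    proof
      fix \<beta>
      assume "\<beta> \<in> X"
      then have "mdeg \<beta> \<le> Max (mdeg ` X)"
        using X by (intro Max_ge) auto
      with that show "\<beta> \<in> {\<beta>. mdeg \<beta> \<le> N}"
        by simp
    qed
    then show "\<forall>\<^sub>F N in sequentially. finite {\<beta>::'n\<Rightarrow>nat. mdeg \<beta> \<le> N} \<and>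
        X \<subseteq> {\<beta>. mdeg \<beta> \<le> N} \<and> {\<beta>. mdeg \<beta> \<le> N} \<subseteq> UNIV"
      using finite_mdeg_le by (auto simp: eventually_sequentially)
  qed
  then show ?thesis
    using filterlim_compose[OF lim] by blast
qed

lemma pseries_rep_borel_measurable:
  fixes g :: "real^'n::finite \<Rightarrow> real"
  assumes "pseries_rep c g"
  obtains r where "r > 0" "\<And>R. R \<le> r \<Longrightarrow> (\<lambda>x. indicator (ball 0 R) x * g x) \<in> borel_measurable lebesgue"
proof -
  obtain r where r: "r > 0" "\<And>x. x \<in> ball 0 r \<Longrightarrow> ((\<lambda>\<beta>. c \<beta> * mono x \<beta>) has_sum g x) UNIV"
    using assms unfolding pseries_rep_def by blast
  have "(\<lambda>x. indicator (ball 0 R) x * g x) \<in> borel_measurable lebesgue" if R: "R \<le> r" for R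
  proof (rule borel_measurable_LIMSEQ_real)
    fix N :: nat
    have partial: "(\<lambda>x::real^'n. indicator (ball 0 R) x * (\<Sum>\<beta>\<in>{\<beta>. mdeg \<beta> \<le> N}. c \<beta> * mono x \<beta>))
        \<in> borel_measurable borel"
    proof (intro borel_measurable_times borel_measurable_indicator borel_measurable_continuous_onI)
      show "ball 0 R \<in> sets borel"
        by simp
      show "continuous_on UNIV (\<lambda>x. \<Sum>\<beta>\<in>{\<beta>. mdeg \<beta> \<le> N}. c \<beta> * mono x \<beta>)"
        by (intro continuous_intros continuous_on_mono)
    qed
    show "(\<lambda>x::real^'n. indicator (ball 0 R) x * (\<Sum>\<beta>\<in>{\<beta>. mdeg \<beta> \<le> N}. c \<beta> * mono x \<beta>))
        \<in> borel_measurable lebesgue"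
      by (rule measurable_completion) (use partial in simp)
  next
    fix x :: "real^'n"
    show "(\<lambda>N. indicator (ball 0 R) x * (\<Sum>\<beta>\<in>{\<beta>. mdeg \<beta> \<le> N}. c \<beta> * mono x \<beta>))
        \<longlonglongrightarrow> indicator (ball 0 R) x * g x"
    proof (cases "x \<in> ball 0 R")
      case True
      then have "(\<lambda>N. \<Sum>\<beta>\<in>{\<beta>. mdeg \<beta> \<le> N}. c \<beta> * mono x \<beta>) \<longlonglongrightarrow> g x"
        using R by (intro tendsto_sum_mdeg_le r(2)) simp
      then show ?thesis
        using True by simp
    qed simp
  qed
  with r(1) show thesis
    by (rule that)
qed

lemma pseries_rep_quotient_borel_measurable:
  fixes f g :: "real^'n::finite \<Rightarrow> real"
  assumes "pseries_rep c f" "pseries_rep c' g"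
  obtains r where "r > 0"
    "\<And>R. R \<le> r \<Longrightarrow> (\<lambda>x. indicator (ball 0 R) x * (\<bar>g x\<bar> / \<bar>f x\<bar> powr s)) \<in> borel_measurable lebesgue"
proof -
  obtain rf where rf: "rf > 0" "\<And>R. R \<le> rf \<Longrightarrow> (\<lambda>x. indicator (ball 0 R) x * f x) \<in> borel_measurable lebesgue"
    using pseries_rep_borel_measurable[OF assms(1)] by blast
  obtain rg where rg: "rg > 0" "\<And>R. R \<le> rg \<Longrightarrow> (\<lambda>x. indicator (ball 0 R) x * g x) \<in> borel_measurable lebesgue"
    using pseries_rep_borel_measurable[OF assms(2)] by blast
  have "(\<lambda>x. indicator (ball 0 R) x * (\<bar>g x\<bar> / \<bar>f x\<bar> powr s)) \<in> borel_measurable lebesgue"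
    if "R \<le> min rf rg" for R
  proof -
    have "(\<lambda>x. indicator (ball 0 R) x * (\<bar>g x\<bar> / \<bar>f x\<bar> powr s)) =
        (\<lambda>x. \<bar>indicator (ball 0 R) x * g x\<bar> / \<bar>indicator (ball 0 R) x * f x\<bar> powr s)"
      by (auto simp: indicator_def fun_eq_iff)
    then show ?thesis
      using rf(2) rg(2) that
      by (simp add: borel_measurable_divide borel_measurable_abs measurable_abs_powr)
  qed
  moreover have "min rf rg > 0"
    using rf rg by simp
  ultimately show thesis
    using that by blast
qed

text \<open>Near the ray through a point \<open>u\<close> where the leading form \<open>g\<^sub>k\<close> of \<open>g\<close> does not vanish,
  \<open>g\<close> is dominated by \<open>g\<^sub>k\<close>, whose size there is \<open>\<sim> l ^ k\<close>.\<close>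
lemma pseries_rep_lower_bound_near_ray:
  fixes g :: "real^'n::finite \<Rightarrow> real"
  assumes rep: "pseries_rep c g" and low: "\<forall>\<beta>. mdeg \<beta> < k \<longrightarrow> c \<beta> = 0"
    and u: "u \<noteq> 0" "hom_part c k u \<noteq> 0"
  obtains \<rho> \<delta> l0 where "0 < \<rho>" "\<rho> \<le> norm u / 2" "\<delta> > 0" "l0 > 0"
    "\<And>l x. 0 < l \<Longrightarrow> l < l0 \<Longrightarrow> x \<in> ball (l *\<^sub>R u) (l * \<rho>) \<Longrightarrow> \<delta> * l ^ k \<le> \<bar>g x\<bar>"
proof -
  obtain \<rho>g A where \<rho>g: "\<rho>g > 0" and A: "A \<ge> 0"
    and "\<And>x. norm x \<le> \<rho>g \<Longrightarrow> \<bar>g x\<bar> \<le> A * (norm x / \<rho>g) ^ k"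
    and rem: "\<And>x. norm x \<le> \<rho>g \<Longrightarrow> \<bar>g x - hom_part c k x\<bar> \<le> A * (norm x / \<rho>g) ^ Suc k"
    using pseries_rep_order_bounds[OF rep low] by blast
  obtain \<rho>1 \<delta> where \<rho>1: "\<rho>1 > 0" and \<delta>: "\<delta> > 0"
    and hom: "\<And>l x. 0 < l \<Longrightarrow> x \<in> ball (l *\<^sub>R u) (l * \<rho>1) \<Longrightarrow> \<delta> * l ^ k \<le> \<bar>hom_part c k x\<bar>"
    using hom_part_lower_bound_near_ray[OF u(2)] by blast
  define \<rho> where "\<rho> = min \<rho>1 (norm u / 2)"
  have \<rho>: "0 < \<rho>" "\<rho> \<le> norm u / 2" "\<rho> \<le> \<rho>1"
    unfolding \<rho>_def using \<rho>1 u by auto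
  define E where "E = A * (2 * norm u / \<rho>g) ^ Suc k"
  have E: "E \<ge> 0"
    unfolding E_def using A \<rho>g by simp
  define l0 where "l0 = min (\<rho>g / (2 * norm u)) (\<delta> / (2 * (E + 1)))"
  have l0: "l0 > 0"
    unfolding l0_def using \<rho>g u \<delta> E by auto
  have "\<delta> / 2 * l ^ k \<le> \<bar>g x\<bar>" if l: "0 < l" "l < l0" and x: "x \<in> ball (l *\<^sub>R u) (l * \<rho>)" for l x
  proof -
    have l_bounds: "l < \<rho>g / (2 * norm u)" "l < \<delta> / (2 * (E + 1))"
      using l(2) unfolding l0_def by auto
    have "l * \<rho> \<le> l * \<rho>1"
      using \<rho>(3) l(1) by simp
    with x have hom_x: "\<delta> * l ^ k \<le> \<bar>hom_part c k x\<bar>"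
      by (intro hom l(1)) simp
    have "l * norm u \<ge> 0"
      using l by simp
    then have nx: "norm x \<le> 2 * (l * norm u)"
      using norm_in_scaled_ball(2)[OF x l(1) \<rho>(2)] by linarith
    also have "\<dots> \<le> \<rho>g"
      using l_bounds(1) u by (simp add: field_simps)
    finally have "\<bar>g x - hom_part c k x\<bar> \<le> A * (norm x / \<rho>g) ^ Suc k"
      by (rule rem)
    also have "\<dots> \<le> A * (2 * (l * norm u) / \<rho>g) ^ Suc k"
      using nx \<rho>g A by (intro mult_left_mono power_mono divide_right_mono) auto
    also have "\<dots> = E * l * l ^ k"
      unfolding E_def by (simp add: power_mult_distrib field_simps)
    also have "\<dots> \<le> \<delta> / 2 * l ^ k"
    proof (rule mult_right_mono)
      have "E * l \<le> (E + 1) * l"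
        using l by simp
      also have "\<dots> \<le> \<delta> / 2"
        using l_bounds(2) E by (simp add: field_simps)
      finally show "E * l \<le> \<delta> / 2" .
    qed (use l in simp)
    finally show ?thesis
      using hom_x by linarith
  qed
  with \<rho>(1,2) half_gt_zero[OF \<delta>] l0 show thesis
    by (rule that)
qed

lemma quotient_powr_lower_bound:
  fixes l \<delta> G F B s :: real and k d :: nat
  assumes l: "l > 0" and \<delta>: "\<delta> > 0" and G: "\<delta> * l ^ k \<le> G"
    and F: "0 < F" "F \<le> B * l ^ d" and s: "s \<ge> 0"
  shows "\<delta> / B powr s * l powr (real k - real d * s) \<le> G / F powr s"
proof -
  have B: "B > 0"
    using F l by (metis not_le mult_nonpos_nonneg zero_le_power less_imp_le order.strict_trans1)
  have "F powr s \<le> (B * l ^ d) powr s"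
    using F s by (intro powr_mono2) auto
  also have "\<dots> = B powr s * l powr (real d * s)"
    using B l by (simp add: powr_mult powr_realpow[symmetric] powr_powr)
  finally have Fs: "F powr s \<le> B powr s * l powr (real d * s)" .
  have "\<delta> / B powr s * l powr (real k - real d * s) = \<delta> * l ^ k / (B powr s * l powr (real d * s))"
    using l B by (simp add: powr_diff powr_realpow field_simps)
  also have "\<dots> \<le> \<delta> * l ^ k / F powr s"
    using Fs F \<delta> l B by (intro divide_left_mono) auto
  also have "\<dots> \<le> G / F powr s"
    using G F by (intro divide_right_mono) auto
  finally show ?thesis .
qed

lemma quotient_powr_upper_bound:
  fixes r G F A m s :: real and K d :: nat
  assumes r: "0 < r" and G: "0 \<le> G" "G \<le> A * r ^ K"
    and F: "m * r ^ d \<le> F" and m: "m > 0" and s: "s \<ge> 0"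
  shows "G / F powr s \<le> A / m powr s * r powr (real K - real d * s)"
proof -
  have "(m * r ^ d) powr s \<le> F powr s"
    using F m r s by (intro powr_mono2) auto
  moreover have "(m * r ^ d) powr s = m powr s * r powr (real d * s)"
    using m r by (simp add: powr_mult powr_realpow[symmetric] powr_powr)
  moreover have "m powr s * r powr (real d * s) > 0"
    using m r by simp
  ultimately have "G / F powr s \<le> A * r ^ K / (m powr s * r powr (real d * s))"
    using G by (intro frac_le) auto
  also have "\<dots> = A / m powr s * r powr (real K - real d * s)"
    using m r by (simp add: powr_diff powr_realpow field_simps)
  finally show ?thesis .
qed

lemma not_loc_integrable0_quotient_if_low_coeff:
  fixes f g :: "real^'n::finite \<Rightarrow> real"
  assumes rep: "pseries_rep c f" and lower_zero: "\<forall>\<beta>. mdeg \<beta> < d \<longrightarrow> c \<beta> = 0"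
    and simple: "\<forall>x. x \<noteq> 0 \<longrightarrow> hom_part c d x \<noteq> 0"
    and repg: "pseries_rep c' g" and s: "s \<ge> 0"
    and coeff: "c' \<beta>0 \<noteq> 0" "real (mdeg \<beta>0) + real CARD('n) \<le> s * real d"
  shows "\<not> loc_integrable0 (\<lambda>x. \<bar>g x\<bar> / \<bar>f x\<bar> powr s)"
proof -
  obtain k u where "k \<le> mdeg \<beta>0" and low: "\<forall>\<beta>. mdeg \<beta> < k \<longrightarrow> c' \<beta> = 0"
    and u: "u \<noteq> 0" "hom_part c' k u \<noteq> 0"
    using pseries_coeff_leading_form[of c' \<beta>0] coeff(1) by blast
  then have e: "(real k - real d * s) + real CARD('n) \<le> 0"
    using coeff(2) by (simp add: algebra_simps)
  obtain \<rho> \<delta> l0 where \<rho>: "0 < \<rho>" "\<rho> \<le> norm u / 2" and \<delta>: "\<delta> > 0" and l0: "l0 > 0"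
    and lower_g: "\<And>l x. 0 < l \<Longrightarrow> l < l0 \<Longrightarrow> x \<in> ball (l *\<^sub>R u) (l * \<rho>) \<Longrightarrow> \<delta> * l ^ k \<le> \<bar>g x\<bar>"
    using pseries_rep_lower_bound_near_ray[OF repg low u] by blast
  obtain r m M where r: "r > 0" and m: "m > 0" and M: "M > 0"
    and lower_f: "\<And>x. norm x \<le> r \<Longrightarrow> m * norm x ^ d \<le> \<bar>f x\<bar>"
    and upper_f: "\<And>x. norm x \<le> r \<Longrightarrow> \<bar>f x\<bar> \<le> M * norm x ^ d"
    using pseries_rep_simple_zero_bounds[OF rep lower_zero simple] by blast
  define B where "B = M * (2 * norm u) ^ d"
  have "\<delta> / B powr s > 0"
    using \<delta> M u by (simp add: B_def)
  moreover have "min l0 (r / (2 * norm u)) > 0"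
    using l0 r u by simp
  ultimately show ?thesis
  proof (rule not_loc_integrable0_if_bounded_below_on_scaled_balls[OF u(1) \<rho> _ e])
    fix l x
    assume l: "0 < l" "l < min l0 (r / (2 * norm u))" and x: "x \<in> ball (l *\<^sub>R u) (l * \<rho>)"
    have "0 \<le> l * norm u"
      using l by simp
    then have nx: "0 < norm x" "norm x \<le> 2 * (l * norm u)"
      using norm_in_scaled_ball[OF x l(1) \<rho>(2)] by linarith+
    moreover have "2 * (l * norm u) \<le> r"
      using l u by (simp add: field_simps)
    ultimately have "norm x \<le> r"
      by linarith
    have "0 < m * norm x ^ d"
      using m nx by simp
    also have "\<dots> \<le> \<bar>f x\<bar>"
      using lower_f[OF \<open>norm x \<le> r\<close>] .
    finally have f_pos: "0 < \<bar>f x\<bar>" .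
    have "\<bar>f x\<bar> \<le> M * norm x ^ d"
      using upper_f[OF \<open>norm x \<le> r\<close>] .
    also have "\<dots> \<le> M * (2 * (l * norm u)) ^ d"
      using M nx by (intro mult_left_mono power_mono) auto
    also have "\<dots> = B * l ^ d"
      by (simp add: B_def power_mult_distrib)
    finally have "\<delta> / B powr s * l powr (real k - real d * s) \<le> \<bar>g x\<bar> / \<bar>f x\<bar> powr s"
      using quotient_powr_lower_bound[OF l(1) \<delta> lower_g[OF l(1) _ x] f_pos _ s] l(2) by simp
    then show "\<delta> / B powr s * l powr (real k - real d * s) \<le> \<bar>\<bar>g x\<bar> / \<bar>f x\<bar> powr s\<bar>"
      by simp
  qed
qed

lemma coeff_vanish_below_order_above:
  fixes c :: "('n::finite \<Rightarrow> nat) \<Rightarrow> real"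
  assumes "\<forall>\<beta>. real (mdeg \<beta>) \<le> a \<longrightarrow> c \<beta> = 0"
  obtains K :: nat where "a < real K" "\<forall>\<beta>. mdeg \<beta> < K \<longrightarrow> c \<beta> = 0"
proof
  show "a < real (nat (\<lfloor>a\<rfloor> + 1))"
    by linarith
  show "\<forall>\<beta>. mdeg \<beta> < nat (\<lfloor>a\<rfloor> + 1) \<longrightarrow> c \<beta> = 0"
  proof (intro allI impI)
    fix \<beta> :: "'n \<Rightarrow> nat"
    assume "mdeg \<beta> < nat (\<lfloor>a\<rfloor> + 1)"
    then have "int (mdeg \<beta>) \<le> \<lfloor>a\<rfloor>"
      by linarith
    with assms show "c \<beta> = 0"
      by (simp add: le_floor_iff)
  qed
qed

lemma loc_integrable0_quotient_if_high_order:
  fixes f g :: "real^'n::finite \<Rightarrow> real"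
  assumes rep: "pseries_rep c f" and lower_zero: "\<forall>\<beta>. mdeg \<beta> < d \<longrightarrow> c \<beta> = 0"
    and simple: "\<forall>x. x \<noteq> 0 \<longrightarrow> hom_part c d x \<noteq> 0" and f0: "f 0 = 0"
    and repg: "pseries_rep c' g" and s: "s \<ge> 0"
    and high: "\<forall>\<beta>. real (mdeg \<beta>) + real CARD('n) \<le> s * real d \<longrightarrow> c' \<beta> = 0"
  shows "loc_integrable0 (\<lambda>x. \<bar>g x\<bar> / \<bar>f x\<bar> powr s)"
proof -
  define h where "h x = \<bar>g x\<bar> / \<bar>f x\<bar> powr s" for x
  have "\<forall>\<beta>. real (mdeg \<beta>) \<le> s * real d - real CARD('n) \<longrightarrow> c' \<beta> = 0"
    using high by (simp add: le_diff_eq)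
  then obtain K where K: "s * real d - real CARD('n) < real K" and low: "\<forall>\<beta>. mdeg \<beta> < K \<longrightarrow> c' \<beta> = 0"
    by (rule coeff_vanish_below_order_above)
  obtain \<rho> A where \<rho>: "\<rho> > 0" and A: "A \<ge> 0"
    and upper_g: "\<And>x. norm x \<le> \<rho> \<Longrightarrow> \<bar>g x\<bar> \<le> A * (norm x / \<rho>) ^ K"
    and "\<And>x. norm x \<le> \<rho> \<Longrightarrow> \<bar>g x - hom_part c' K x\<bar> \<le> A * (norm x / \<rho>) ^ Suc K"
    using pseries_rep_order_bounds[OF repg low] by blast
  obtain r m M where r: "r > 0" and m: "m > 0" and "M > 0"
    and lower_f: "\<And>x. norm x \<le> r \<Longrightarrow> m * norm x ^ d \<le> \<bar>f x\<bar>"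
    and "\<And>x. norm x \<le> r \<Longrightarrow> \<bar>f x\<bar> \<le> M * norm x ^ d"
    using pseries_rep_simple_zero_bounds[OF rep lower_zero simple] by blast
  obtain r' where r': "r' > 0" "\<And>R. R \<le> r' \<Longrightarrow> (\<lambda>x. indicator (ball 0 R) x * h x) \<in> borel_measurable lebesgue"
    unfolding h_def using pseries_rep_quotient_borel_measurable[OF rep repg] by blast
  define R where "R = min (min r \<rho>) r'"
  have R: "R > 0" "R \<le> r" "R \<le> \<rho>" "R \<le> r'"
    unfolding R_def using r \<rho> r' by auto
  have bound: "\<bar>h x\<bar> \<le> A / \<rho> ^ K / m powr s * norm x powr (real K - real d * s)"
    if x: "norm x < R" "x \<noteq> 0" for x
  proof -
    have "\<bar>g x\<bar> \<le> A / \<rho> ^ K * norm x ^ K"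
      using upper_g[of x] x R by (simp add: power_divide)
    moreover have "m * norm x ^ d \<le> \<bar>f x\<bar>"
      using lower_f[of x] x R by simp
    ultimately have "\<bar>g x\<bar> / \<bar>f x\<bar> powr s \<le> A / \<rho> ^ K / m powr s * norm x powr (real K - real d * s)"
      using x(2) by (intro quotient_powr_upper_bound m s) auto
    then show ?thesis
      by (simp add: h_def)
  qed
  \<comment> \<open>\<open>h 0 = \<bar>g 0\<bar> / 0 = 0\<close> in HOL, so the bound away from \<open>0\<close> suffices.\<close>
  have "h 0 = 0"
    using f0 by (simp add: h_def)
  moreover have "(\<lambda>x. indicator (ball 0 R) x * h x) \<in> borel_measurable lebesgue"
    using r'(2)[OF R(4)] .
  moreover have "- real CARD('n) < real K - real d * s"
    using K by (simp add: algebra_simps)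
  moreover have "A / \<rho> ^ K / m powr s \<ge> 0"
    using A \<rho> by simp
  ultimately have "h absolutely_integrable_on ball 0 R"
    using absolutely_integrable_on_ball_if_norm_powr_bound[OF R(1) _ _ bound] by blast
  then show ?thesis
    unfolding loc_integrable0_def h_def using R(1) by (intro exI[of _ "ball 0 R"]) auto
qed

lemma loc_integrable0_quotient_iff:
  fixes f g :: "real^'n::finite \<Rightarrow> real"
  assumes "pseries_rep c f" "\<forall>\<beta>. mdeg \<beta> < d \<longrightarrow> c \<beta> = 0"
    "\<forall>x. x \<noteq> 0 \<longrightarrow> hom_part c d x \<noteq> 0" "f 0 = 0" "pseries_rep c' g" "s \<ge> 0"
  shows "loc_integrable0 (\<lambda>x. \<bar>g x\<bar> / \<bar>f x\<bar> powr s) \<longleftrightarrow>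
    (\<forall>\<beta>. real (mdeg \<beta>) + real CARD('n) \<le> s * real d \<longrightarrow> c' \<beta> = 0)"
  using not_loc_integrable0_quotient_if_low_coeff[OF assms(1-3,5,6)]
    loc_integrable0_quotient_if_high_order[OF assms] by blast

section \<open>Multiplier ideals, jumping numbers and the threshold\<close>

lemma mult_ideal0_simple_zero:
  fixes f :: "real^'n::finite \<Rightarrow> real"
  assumes "pseries_rep c f" "\<forall>\<beta>. mdeg \<beta> < d \<longrightarrow> c \<beta> = 0"
    "\<forall>x. x \<noteq> 0 \<longrightarrow> hom_part c d x \<noteq> 0" "f 0 = 0" "\<alpha> \<ge> 0"
  shows "mult_ideal0 f \<alpha> = maxideal_pow (\<lfloor>\<alpha> * real d\<rfloor> - int CARD('n) + 1)"
proof -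
  have "(\<forall>\<beta>. real (mdeg \<beta>) + real CARD('n) \<le> \<alpha> * real d \<longrightarrow> c' \<beta> = 0) \<longleftrightarrow>
      (\<forall>\<beta>. int (mdeg \<beta>) < \<lfloor>\<alpha> * real d\<rfloor> - int CARD('n) + 1 \<longrightarrow> c' \<beta> = 0)" for c' :: "('n \<Rightarrow> nat) \<Rightarrow> real"
  proof -
    have "real (mdeg \<beta>) + real CARD('n) \<le> \<alpha> * real d \<longleftrightarrow>
        int (mdeg \<beta>) < \<lfloor>\<alpha> * real d\<rfloor> - int CARD('n) + 1" for \<beta> :: "'n \<Rightarrow> nat"
      using le_floor_iff[of "int (mdeg \<beta>) + int CARD('n)" "\<alpha> * real d"] by auto
    then show ?thesis
      by simp
  qed
  then show ?thesis
    using loc_integrable0_quotient_iff[OF assms(1-4) _ assms(5)]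
    unfolding mult_ideal0_def maxideal_pow_def analytic_germ0_def by blast
qed

lemma maxideal_pow_nonpos:
  assumes "k \<le> 0"
  shows "maxideal_pow k = {g::real^'n::finite \<Rightarrow> real. analytic_germ0 g}"
  using assms unfolding maxideal_pow_def analytic_germ0_def by force

lemma pseries_rep_mono:
  "pseries_rep (\<lambda>\<beta>. if \<beta> = \<beta>1 then 1 else 0) (\<lambda>x::real^'n::finite. mono x \<beta>1)"
  unfolding pseries_rep_def
  by (intro exI[of _ 1] conjI ballI has_sum_finite_neutralI[of "{\<beta>1}"]) auto

lemma mono_in_maxideal_pow:
  assumes "k \<le> int (mdeg \<beta>1)"
  shows "(\<lambda>x::real^'n::finite. mono x \<beta>1) \<in> maxideal_pow k"
  unfolding maxideal_pow_def using pseries_rep_mono assms by fastforce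

text \<open>Along the diagonal the monomial has size \<open>t ^ mdeg \<beta>1\<close>, which is incompatible with the
  \<open>O(t ^ k)\<close> bound enjoyed by every member of \<open>maxideal_pow k\<close>.\<close>
lemma mono_notin_maxideal_pow:
  assumes "int (mdeg \<beta>1) < k"
  shows "(\<lambda>x::real^'n::finite. mono x \<beta>1) \<notin> maxideal_pow k"
proof
  define N where "N = mdeg \<beta>1"
  assume "(\<lambda>x::real^'n. mono x \<beta>1) \<in> maxideal_pow k"
  then obtain c where rep: "pseries_rep c (\<lambda>x::real^'n. mono x \<beta>1)"
    and low: "\<forall>\<beta>. int (mdeg \<beta>) < k \<longrightarrow> c \<beta> = 0"
    unfolding maxideal_pow_def by blast
  have "\<forall>\<beta>. mdeg \<beta> < Suc N \<longrightarrow> c \<beta> = 0"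
    using low assms unfolding N_def by auto
  then obtain \<rho> A where \<rho>: "\<rho> > 0" and A: "A \<ge> 0"
    and bound: "\<And>x. norm x \<le> \<rho> \<Longrightarrow> \<bar>mono x \<beta>1\<bar> \<le> A * (norm x / \<rho>) ^ Suc N"
    and "\<And>x. norm x \<le> \<rho> \<Longrightarrow> \<bar>mono x \<beta>1 - hom_part c (Suc N) x\<bar> \<le> A * (norm x / \<rho>) ^ Suc (Suc N)"
    using pseries_rep_order_bounds[OF rep] by blast
  define v :: "real^'n" where "v = (\<chi> i. 1)"
  have "v \<noteq> 0"
    by (simp add: v_def vec_eq_iff)
  define w where "w = (\<rho> / norm v) *\<^sub>R v"
  have norm_w: "norm w = \<rho>"
    using \<rho> \<open>v \<noteq> 0\<close> by (simp add: w_def)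
  define a where "a = \<bar>mono w \<beta>1\<bar>"
  have a: "a > 0"
    using \<rho> \<open>v \<noteq> 0\<close> by (simp add: a_def w_def v_def mono_scaleR mono_const)
  define s where "s = min 1 (a / (2 * (A + 1)))"
  have s: "0 < s" "s \<le> 1" "A * s \<le> a / 2"
  proof -
    have "A * s \<le> (A + 1) * (a / (2 * (A + 1)))"
      unfolding s_def using A a by (intro mult_mono) auto
    also have "\<dots> = a / 2"
      using A by (simp add: field_simps)
    finally show "A * s \<le> a / 2" .
  qed (use a A in \<open>auto simp: s_def\<close>)
  have "s ^ N * a = \<bar>mono (s *\<^sub>R w) \<beta>1\<bar>"
    using s by (simp add: a_def mono_scaleR abs_mult N_def)
  also have "\<dots> \<le> A * s ^ Suc N"
    using bound[of "s *\<^sub>R w"] s \<rho> norm_w by simp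
  also have "\<dots> \<le> s ^ N * (a / 2)"
    using s(3) s(1) by (simp add: mult.commute mult.left_commute mult_left_mono)
  finally show False
    using s(1) a by simp
qed

lemma exists_mdeg_eq: "\<exists>\<beta>::'n::finite \<Rightarrow> nat. mdeg \<beta> = N"
proof -
  obtain i :: 'n where True by blast
  have "mdeg (\<lambda>j. if j = i then N else 0) = N"
    by (simp add: mdeg_def)
  then show ?thesis
    by blast
qed

lemma maxideal_pow_eq_iff:
  "maxideal_pow a = (maxideal_pow b :: (real^'n::finite \<Rightarrow> real) set) \<longleftrightarrow> a = b \<or> (a \<le> 0 \<and> b \<le> 0)"
proof
  assume eq: "maxideal_pow a = (maxideal_pow b :: (real^'n \<Rightarrow> real) set)"
  show "a = b \<or> (a \<le> 0 \<and> b \<le> 0)"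
  proof (rule ccontr)
    assume "\<not> (a = b \<or> (a \<le> 0 \<and> b \<le> 0))"
    then have "min a b \<le> max a b - 1" "1 \<le> max a b"
      by auto
    obtain \<beta>1 :: "'n \<Rightarrow> nat" where \<beta>1: "mdeg \<beta>1 = nat (max a b - 1)"
      using exists_mdeg_eq by blast
    have "(\<lambda>x::real^'n. mono x \<beta>1) \<in> maxideal_pow (min a b)"
      using \<beta>1 \<open>min a b \<le> max a b - 1\<close> by (intro mono_in_maxideal_pow) simp
    moreover have "(\<lambda>x::real^'n. mono x \<beta>1) \<notin> maxideal_pow (max a b)"
      using \<beta>1 \<open>1 \<le> max a b\<close> by (intro mono_notin_maxideal_pow) simp
    ultimately show False
      using eq by (cases "a \<le> b") (simp_all add: min_def max_def)
  qed
qed (auto simp: maxideal_pow_nonpos)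

lemma const_one_in_maxideal_pow_iff:
  "(\<lambda>x::real^'n::finite. 1) \<in> maxideal_pow k \<longleftrightarrow> k \<le> 0"
proof -
  have one: "(\<lambda>x::real^'n. 1) = (\<lambda>x. mono x (\<lambda>_. 0))" and "mdeg (\<lambda>_::'n. 0::nat) = 0"
    by (simp_all add: mono_def mdeg_def)
  then show ?thesis
    using mono_in_maxideal_pow[of k "\<lambda>_::'n. 0"] mono_notin_maxideal_pow[of "\<lambda>_::'n. 0" k]
    by (auto simp: one simp flip: not_le)
qed

lemma floor_diff_eq_ceiling_minus_1:
  fixes e x :: real
  assumes "0 < e" "e < x - \<lceil>x\<rceil> + 1"
  shows "\<lfloor>x - e\<rfloor> = \<lceil>x\<rceil> - 1"
proof (rule floor_unique)
  show "real_of_int (\<lceil>x\<rceil> - 1) \<le> x - e"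
    using assms by simp
  show "x - e < real_of_int (\<lceil>x\<rceil> - 1) + 1"
    using assms le_of_int_ceiling[of x] by linarith
qed

lemma mem_jumping_numbers0_simple_zero_iff:
  fixes f :: "real^'n::finite \<Rightarrow> real"
  assumes rep: "pseries_rep c f" and lower_zero: "\<forall>\<beta>. mdeg \<beta> < d \<longrightarrow> c \<beta> = 0"
    and simple: "\<forall>x. x \<noteq> 0 \<longrightarrow> hom_part c d x \<noteq> 0" and f0: "f 0 = 0"
  shows "\<alpha> \<in> jumping_numbers0 f \<longleftrightarrow>
    \<alpha> > 0 \<and> \<lceil>\<alpha> * real d\<rceil> = \<lfloor>\<alpha> * real d\<rfloor> \<and> int CARD('n) \<le> \<lfloor>\<alpha> * real d\<rfloor>"
proof (cases "\<alpha> > 0")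
  case True
  have d: "real d > 0"
    using pseries_rep_simple_zero_order_pos[OF rep simple f0] by simp
  define x where "x = \<alpha> * real d"
  define n where "n = int CARD('n)"
  have J: "mult_ideal0 f \<beta> = maxideal_pow (\<lfloor>\<beta> * real d\<rfloor> - n + 1)" if "\<beta> \<ge> 0" for \<beta>
    unfolding n_def by (rule mult_ideal0_simple_zero[OF rep lower_zero simple f0 that])
  have ceiling_x: "real_of_int \<lceil>x\<rceil> - 1 < x" "x \<le> real_of_int \<lceil>x\<rceil>"
    by linarith+
  define e1 where "e1 = min \<alpha> ((x - \<lceil>x\<rceil> + 1) / real d)"
  have e1: "e1 > 0"
    unfolding e1_def using True d ceiling_x by simp
  \<comment> \<open>Just below \<open>\<alpha>\<close> the multiplier ideal is constant, given by the left limit of the floor.\<close>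
  have left: "mult_ideal0 f (\<alpha> - e) = maxideal_pow (\<lceil>x\<rceil> - n)" if e: "0 < e" "e < e1" for e
  proof -
    have "e * real d < x - \<lceil>x\<rceil> + 1" "e * real d > 0"
      using e d unfolding e1_def by (simp_all add: field_simps)
    then have "\<lfloor>(\<alpha> - e) * real d\<rfloor> = \<lceil>x\<rceil> - 1"
      using floor_diff_eq_ceiling_minus_1[of "e * real d" x] unfolding x_def by (simp add: algebra_simps)
    moreover have "\<alpha> - e \<ge> 0"
      using e unfolding e1_def by simp
    ultimately show ?thesis
      using J by simp
  qed
  have "\<alpha> \<in> jumping_numbers0 f \<longleftrightarrow>
      maxideal_pow (\<lceil>x\<rceil> - n) \<noteq> (maxideal_pow (\<lfloor>x\<rfloor> - n + 1) :: (real^'n \<Rightarrow> real) set)"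
  proof
    assume "\<alpha> \<in> jumping_numbers0 f"
    then obtain e0 where "e0 > 0" and jump: "\<And>e. 0 < e \<Longrightarrow> e < e0 \<Longrightarrow> mult_ideal0 f (\<alpha> - e) \<noteq> mult_ideal0 f \<alpha>"
      unfolding jumping_numbers0_def by blast
    define e where "e = min e0 e1 / 2"
    have e: "0 < e" "e < e0" "e < e1"
      using \<open>e0 > 0\<close> e1 unfolding e_def by auto
    then show "maxideal_pow (\<lceil>x\<rceil> - n) \<noteq> (maxideal_pow (\<lfloor>x\<rfloor> - n + 1) :: (real^'n \<Rightarrow> real) set)"
      using jump[OF e(1,2)] left[OF e(1,3)] J[of \<alpha>] True unfolding x_def by simp
  next
    assume "maxideal_pow (\<lceil>x\<rceil> - n) \<noteq> (maxideal_pow (\<lfloor>x\<rfloor> - n + 1) :: (real^'n \<Rightarrow> real) set)"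
    then have "\<forall>e. 0 < e \<and> e < e1 \<longrightarrow> mult_ideal0 f (\<alpha> - e) \<noteq> mult_ideal0 f \<alpha>"
      using left J[of \<alpha>] True unfolding x_def by simp
    with True e1 show "\<alpha> \<in> jumping_numbers0 f"
      unfolding jumping_numbers0_def by blast
  qed
  also have "\<dots> \<longleftrightarrow> \<lceil>x\<rceil> = \<lfloor>x\<rfloor> \<and> n \<le> \<lfloor>x\<rfloor>"
  proof -
    have "\<lfloor>x\<rfloor> \<le> \<lceil>x\<rceil>" "\<lceil>x\<rceil> \<le> \<lfloor>x\<rfloor> + 1"
      using ceiling_x by linarith+
    then show ?thesis
      unfolding maxideal_pow_eq_iff by presburger
  qed
  finally show ?thesis
    using True unfolding x_def n_def by simp
qed (simp add: jumping_numbers0_def)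

lemma jumping_numbers0_simple_zero:
  fixes f :: "real^'n::finite \<Rightarrow> real"
  assumes "pseries_rep c f" "\<forall>\<beta>. mdeg \<beta> < d \<longrightarrow> c \<beta> = 0"
    "\<forall>x. x \<noteq> 0 \<longrightarrow> hom_part c d x \<noteq> 0" "f 0 = 0"
  shows "jumping_numbers0 f = {real_of_int k / real d | k. k \<ge> int CARD('n)}"
proof (intro set_eqI)
  fix \<alpha> :: real
  have d: "real d > 0"
    using pseries_rep_simple_zero_order_pos[OF assms(1,3,4)] by simp
  show "\<alpha> \<in> jumping_numbers0 f \<longleftrightarrow> \<alpha> \<in> {real_of_int k / real d | k. k \<ge> int CARD('n)}"
    unfolding mem_jumping_numbers0_simple_zero_iff[OF assms]
  proof
    assume \<alpha>: "\<alpha> > 0 \<and> \<lceil>\<alpha> * real d\<rceil> = \<lfloor>\<alpha> * real d\<rfloor> \<and> int CARD('n) \<le> \<lfloor>\<alpha> * real d\<rfloor>"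
    then have "\<alpha> * real d = \<lfloor>\<alpha> * real d\<rfloor>"
      using le_of_int_ceiling[of "\<alpha> * real d"] of_int_floor_le[of "\<alpha> * real d"] by linarith
    then show "\<alpha> \<in> {real_of_int k / real d | k. k \<ge> int CARD('n)}"
      using \<alpha> d by (intro CollectI exI[of _ "\<lfloor>\<alpha> * real d\<rfloor>"]) (simp add: field_simps)
  next
    assume "\<alpha> \<in> {real_of_int k / real d | k. k \<ge> int CARD('n)}"
    then obtain k where k: "k \<ge> int CARD('n)" "\<alpha> = real_of_int k / real d"
      by blast
    moreover have "int CARD('n) > 0"
      by simp
    ultimately have "\<alpha> * real d = real_of_int k" "k > 0"
      using d by (simp, linarith)
    then show "\<alpha> > 0 \<and> \<lceil>\<alpha> * real d\<rceil> = \<lfloor>\<alpha> * real d\<rfloor> \<and> int CARD('n) \<le> \<lfloor>\<alpha> * real d\<rfloor>"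
      using k d by simp
  qed
qed

lemma rlct_simple_zero:
  fixes f :: "real^'n::finite \<Rightarrow> real"
  assumes "pseries_rep c f" "\<forall>\<beta>. mdeg \<beta> < d \<longrightarrow> c \<beta> = 0"
    "\<forall>x. x \<noteq> 0 \<longrightarrow> hom_part c d x \<noteq> 0" "f 0 = 0"
  shows "rlct f = real CARD('n) / real d"
proof -
  have d: "real d > 0"
    using pseries_rep_simple_zero_order_pos[OF assms(1,3,4)] by simp
  have one: "analytic_germ0 (\<lambda>x::real^'n. 1)"
    using pseries_rep_mono[of "\<lambda>_. 0"] unfolding analytic_germ0_def by (auto simp: mono_def)
  have "\<alpha> > 0 \<and> \<not> loc_integrable0 (\<lambda>x. 1 / \<bar>f x\<bar> powr \<alpha>) \<longleftrightarrow> real CARD('n) / real d \<le> \<alpha>" for \<alpha>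
  proof (cases "\<alpha> > 0")
    case True
    have "loc_integrable0 (\<lambda>x. 1 / \<bar>f x\<bar> powr \<alpha>) \<longleftrightarrow> (\<lambda>x. 1) \<in> mult_ideal0 f \<alpha>"
      using one by (simp add: mult_ideal0_def)
    also have "\<dots> \<longleftrightarrow> \<lfloor>\<alpha> * real d\<rfloor> - int CARD('n) + 1 \<le> 0"
      using True by (simp add: mult_ideal0_simple_zero[OF assms] const_one_in_maxideal_pow_iff)
    also have "\<dots> \<longleftrightarrow> \<lfloor>\<alpha> * real d\<rfloor> < int CARD('n)"
      by linarith
    also have "\<dots> \<longleftrightarrow> \<alpha> < real CARD('n) / real d"
      using d by (simp add: floor_less_iff field_simps)
    finally show ?thesis
      using True by auto
  next
    case False
    moreover have "real CARD('n) / real d > 0"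
      using d by simp
    ultimately show ?thesis
      by auto
  qed
  then have "{\<alpha>. \<alpha> > 0 \<and> \<not> loc_integrable0 (\<lambda>x. 1 / \<bar>f x\<bar> powr \<alpha>)} = {real CARD('n) / real d..}"
    by auto
  then show ?thesis
    unfolding rlct_def by simp
qed

theorem proposition3p3:
  fixes f :: "real^'n \<Rightarrow> real" and c :: "('n \<Rightarrow> nat) \<Rightarrow> real" and d :: nat
  assumes rep: "pseries_rep c f"
    and fd_nonzero: "\<exists>\<beta>. mdeg \<beta> = d \<and> c \<beta> \<noteq> 0"
    and lower_zero: "\<forall>\<beta>. mdeg \<beta> < d \<longrightarrow> c \<beta> = 0"
    and f0: "f 0 = 0"
    and simple: "\<forall>x. x \<noteq> 0 \<longrightarrow> hom_part c d x \<noteq> 0"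
  shows "(\<forall>\<alpha>::real. \<alpha> > 0 \<and> \<alpha> \<in> \<rat> \<longrightarrow>
            mult_ideal0 f \<alpha> = maxideal_pow (\<lfloor>\<alpha> * real d\<rfloor> - int CARD('n) + 1))
       \<and> jumping_numbers0 f = {real_of_int k / real d | k. k \<ge> int CARD('n)}
       \<and> rlct f = real CARD('n) / real d"
  using mult_ideal0_simple_zero[OF rep lower_zero simple f0]
    jumping_numbers0_simple_zero[OF rep lower_zero simple f0]
    rlct_simple_zero[OF rep lower_zero simple f0]
  by auto

end
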